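(* Let $G$ be a finite connected graph (loops and multiple edges allowed) and $T_0\subset G$ a spanning tree. Let $N=|E(G-T_0)|$, and let $Mesh(G,T_0)$ be the $N\times N$ mesh matrix and $Mesh^\#(G,T_0)=Y^t Y$ the reduced mesh matrix, so that $Mesh(G,T_0)=Id+Y^tY$. For $j=0,1,\dots,N$ let $ST_j(G,T_0)$ be the number of spanning trees $T$ of $G$ with $|E(T)\cap E(G-T_0)|=j$. Then $$\det((U+1)\,Id-Mesh(G,T_0))=\det(U\,Id-Mesh^\#(G,T_0))=U^N+\sum_{j=1}^N(-1)^j\,ST_j(G,T_0)\,U^{N-j}.$$ In particular, setting $U=-1$, $\det(Mesh(G,T_0))=\sum_{j=0}^N ST_j(G,T_0)$, the number of spanning trees of $G$.
   Context: Choose an orientation for every edge of $G$. List the edges of $E(G-T_0)$ as $\vec e_1,\dots,\vec e_N$ and those of $T_0$ as $\vec f_1,\dots,\vec f_M$, $M=|E(T_0)|$; $C_1(G;\mathbb R)$ is the real vector space with basis the oriented edges, with the standard inner product $\langle\cdot,\cdot\rangle$ making the edges orthonormal. For $\vec e_j$ directed from $P_j$ to $Q_j$: if $P_j=Q_j$ (a loop) put $D(\vec e_j)=0$; otherwise let $D(\vec e_j)\in C_1(T_0;\mathbb Z)$ be the 1-chain given by the unique simple path in $T_0$ from $Q_j$ to $P_j$, each of its edges taken with the orientation in which the path traverses it (so $\partial D(\vec e_j)=P_j-Q_j$). Put $Z[j]=\vec e_j+D(\vec e_j)$, an integral 1-cycle. The mesh matrix is $Mesh(G,T_0)=(\langle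 Z[i],Z[j]\rangle)_{1\le i,j\le N}$. Let $Y$ be the $M\times N$ matrix of $D$ with respect to the bases $\{\vec e_j\}$, $\{\vec f_k\}$ (entries $0,\pm1$), i.e. $Z[j]=\vec e_j+\sum_k Y_{kj}\vec f_k$; then $Mesh(G,T_0)=Id+Y^tY$ and $Mesh^\#(G,T_0):=Y^tY$. *)

theory Defs
  imports "Jordan_Normal_Form.Determinant"
begin

text \<open>A finite multigraph (loops and parallel edges allowed) is given by a vertex set V,
an edge set E and a map ends :: 'e => 'v * 'v. The map ends also fixes the chosen
orientation: edge e is directed from fst (ends e) to snd (ends e).\<close>

definition joins :: "('e \<Rightarrow> 'v \<times> 'v) \<Rightarrow> 'e \<Rightarrow> 'v \<Rightarrow> 'v \<Rightarrow> bool" where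
  "joins ends e a b \<longleftrightarrow> ends e = (a, b) \<or> ends e = (b, a)"

definition adj_rel :: "('e \<Rightarrow> 'v \<times> 'v) \<Rightarrow> 'e set \<Rightarrow> ('v \<times> 'v) set" where
  "adj_rel ends F = {(a, b). \<exists>e\<in>F. joins ends e a b}"

definition connected_on :: "'v set \<Rightarrow> ('e \<Rightarrow> 'v \<times> 'v) \<Rightarrow> 'e set \<Rightarrow> bool" where
  "connected_on V ends F \<longleftrightarrow> (\<forall>u\<in>V. \<forall>v\<in>V. (u, v) \<in> (adj_rel ends F)\<^sup>*)"

text \<open>A cycle in F: closed walk v0 e1 v1 ... ek vk = v0 with k >= 1, distinct edges
and distinct vertices v0..v(k-1) (loops are cycles of length 1, parallel edges give
cycles of length 2).\<close>
definition has_cycle :: "('e \<Rightarrow> 'v \<times> 'v) \<Rightarrow> 'e set \<Rightarrow> bool" where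
  "has_cycle ends F \<longleftrightarrow> (\<exists>vs es. es \<noteq> [] \<and> distinct es \<and> set es \<subseteq> F \<and>
      length vs = Suc (length es) \<and> hd vs = last vs \<and> distinct (butlast vs) \<and>
      (\<forall>i<length es. joins ends (es ! i) (vs ! i) (vs ! Suc i)))"

definition spanning_tree :: "'v set \<Rightarrow> 'e set \<Rightarrow> ('e \<Rightarrow> 'v \<times> 'v) \<Rightarrow> 'e set \<Rightarrow> bool" where
  "spanning_tree V E ends T \<longleftrightarrow> T \<subseteq> E \<and> connected_on V ends T \<and> \<not> has_cycle ends T"

definition is_path :: "('e \<Rightarrow> 'v \<times> 'v) \<Rightarrow> 'e set \<Rightarrow> 'v list \<Rightarrow> 'e list \<Rightarrow> 'v \<Rightarrow> 'v \<Rightarrow> bool" where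
  "is_path ends F vs es a b \<longleftrightarrow> length vs = Suc (length es) \<and> hd vs = a \<and> last vs = b \<and>
      distinct vs \<and> set es \<subseteq> F \<and> (\<forall>i<length es. joins ends (es ! i) (vs ! i) (vs ! Suc i))"

definition tree_path :: "('e \<Rightarrow> 'v \<times> 'v) \<Rightarrow> 'e set \<Rightarrow> 'v \<Rightarrow> 'v \<Rightarrow> 'v list \<times> 'e list" where
  "tree_path ends T0 a b = (THE p. is_path ends T0 (fst p) (snd p) a b)"

text \<open>Coefficient of the tree edge f in the 1-chain D(e): the path in T0 from Q to P,
where e is directed from P to Q; each edge is counted with sign +1 if traversed in its
orientation and -1 otherwise.\<close>
definition Dchain :: "('e \<Rightarrow> 'v \<times> 'v) \<Rightarrow> 'e set \<Rightarrow> 'e \<Rightarrow> 'e \<Rightarrow> int" where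
  "Dchain ends T0 e f =
    (if fst (ends e) = snd (ends e) then 0
     else (let p = tree_path ends T0 (snd (ends e)) (fst (ends e)); vs = fst p; es = snd p in
       (\<Sum>i<length es. if es ! i = f then (if ends f = (vs ! i, vs ! Suc i) then 1 else -1) else 0)))"

definition Zcycle :: "('e \<Rightarrow> 'v \<times> 'v) \<Rightarrow> 'e set \<Rightarrow> 'e \<Rightarrow> 'e \<Rightarrow> int" where
  "Zcycle ends T0 e x = (if x = e then 1 else 0) + Dchain ends T0 e x"

text \<open>Mesh matrix: Gram matrix of the Z[j] in C_1(G;R), edges orthonormal.
es enumerates E(G - T0).\<close>
definition mesh :: "'e set \<Rightarrow> ('e \<Rightarrow> 'v \<times> 'v) \<Rightarrow> 'e set \<Rightarrow> 'e list \<Rightarrow> real mat" where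
  "mesh E ends T0 es = mat (length es) (length es)
     (\<lambda>(i, j). real_of_int (\<Sum>x\<in>E. Zcycle ends T0 (es ! i) x * Zcycle ends T0 (es ! j) x))"

text \<open>The M x N matrix Y of D (fs enumerates E(T0)), and the reduced mesh matrix Y^t Y.\<close>
definition Ymat :: "('e \<Rightarrow> 'v \<times> 'v) \<Rightarrow> 'e set \<Rightarrow> 'e list \<Rightarrow> 'e list \<Rightarrow> real mat" where
  "Ymat ends T0 es fs = mat (length fs) (length es)
     (\<lambda>(k, j). real_of_int (Dchain ends T0 (es ! j) (fs ! k)))"

definition mesh_red :: "('e \<Rightarrow> 'v \<times> 'v) \<Rightarrow> 'e set \<Rightarrow> 'e list \<Rightarrow> 'e list \<Rightarrow> real mat" where
  "mesh_red ends T0 es fs = transpose_mat (Ymat ends T0 es fs) * Ymat ends T0 es fs"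

definition ST :: "'v set \<Rightarrow> 'e set \<Rightarrow> ('e \<Rightarrow> 'v \<times> 'v) \<Rightarrow> 'e set \<Rightarrow> nat \<Rightarrow> nat" where
  "ST V E ends T0 j = card {T. spanning_tree V E ends T \<and> card (T \<inter> (E - T0)) = j}"

end

theory Submission
  imports Defs "HOL-Library.FuncSet"
begin

text \<open>Fix a root r and index the other vertices by the edges of T0. For a set F of \<open>|V| - 1\<close>
  edges, the reduced incidence matrix (rows: non-root vertices, columns: F) has determinant
  \<open>\<plusminus>1\<close> if F is a spanning tree and 0 otherwise: chains along paths from the root give an inverse
  when F is connected, a cycle gives a dependency among the columns, and the vertices unreachable
  from the root give one among the rows. Since \<open>\<partial>D(e) = -\<partial>e\<close>, exchanging tree edges R for
  non-tree edges C multiplies the reduced incidence matrix of T0 by a matrix whose determinant is,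
  up to sign, the minor of Y with rows R and columns C. So that minor squared is 1 or 0 according
  as \<open>(T0 - R) \<union> C\<close> is a spanning tree, by Cauchy-Binet the principal minor of \<open>Y\<^sup>t Y\<close> on C
  counts these R, and expanding \<open>det (U Id - Y\<^sup>t Y)\<close> and \<open>det (Id + Y\<^sup>t Y)\<close> along the diagonal
  groups the counts by \<open>j = |C|\<close> into the numbers \<open>ST\<^sub>j\<close>.\<close>

text \<open>Determinants of matrices indexed by an arbitrary finite set, so that rows and columns can be
  vertices and edges themselves.\<close>

definition det_on :: "('a \<Rightarrow> 'a \<Rightarrow> 'b::comm_ring_1) \<Rightarrow> 'a set \<Rightarrow> 'b" where
  "det_on A S = (\<Sum>p | p permutes S. of_int (sign p) * (\<Prod>i\<in>S. A i (p i)))"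

lemma det_on_cong:
  assumes "\<And>i j. i \<in> S \<Longrightarrow> j \<in> S \<Longrightarrow> A i j = B i j"
  shows "det_on A S = det_on B S"
  unfolding det_on_def
  by (intro sum.cong prod.cong refl arg_cong2[where f = "(*)"])
     (use assms permutes_in_image in fastforce)

lemma det_on_transpose:
  assumes "finite S"
  shows "det_on (\<lambda>i j. A j i) S = det_on A S"
proof -
  have "det_on (\<lambda>i j. A j i) S
      = (\<Sum>p | p permutes S. of_int (sign (inv_into UNIV p)) * (\<Prod>i\<in>S. A (inv_into UNIV p i) i))"
    unfolding det_on_def by (subst sum_permutations_inverse) simp
  also have "\<dots> = det_on A S"
    unfolding det_on_def
  proof (rule sum.cong[OF refl])
    fix p assume "p \<in> {p. p permutes S}"
    hence p: "p permutes S" by simp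
    have "(\<Prod>i\<in>S. A (inv_into UNIV p i) i) = (\<Prod>i\<in>S. A (inv_into UNIV p (p i)) (p i))"
      using prod.permute[OF p, of "\<lambda>i. A (inv_into UNIV p i) i"] by (simp add: o_def)
    also have "\<dots> = (\<Prod>i\<in>S. A i (p i))" by (simp add: permutes_inverses(2)[OF p])
    moreover have "sign (inv_into UNIV p) = sign p"
      using sign_inverse permutes_imp_permutation[OF assms p] by blast
    ultimately show "of_int (sign (inv_into UNIV p)) * (\<Prod>i\<in>S. A (inv_into UNIV p i) i)
        = of_int (sign p) * (\<Prod>i\<in>S. A i (p i))" by simp
  qed
  finally show ?thesis .
qed

lemma det_on_reindex:
  assumes S: "finite S" and h: "inj_on h S"
  shows "det_on (\<lambda>i j. A (h i) (h j)) S = det_on A (h ` S)"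
proof -
  have bh: "bij_betw h S (h ` S)" using h by (simp add: bij_betw_imageI)
  have bh': "bij_betw (inv_into S h) (h ` S) S" by (rule bij_betw_inv_into[OF bh])
  show ?thesis unfolding det_on_def
  proof (rule sum.reindex_bij_witness[where i="map_permutation (h ` S) (inv_into S h)"
        and j="map_permutation S h"])
    fix p assume "p \<in> {p. p permutes S}"
    hence p: "p permutes S" by simp
    show "map_permutation (h ` S) (inv_into S h) (map_permutation S h p) = p"
      by (rule map_permutation_compose_inv[OF bh p]) (simp add: h)
    show "map_permutation S h p \<in> {p. p permutes h ` S}"
      using map_permutation_permutes[OF bh p] by simp
    have "(\<Prod>y\<in>h ` S. A y (map_permutation S h p y))
        = (\<Prod>i\<in>S. A (h i) (map_permutation S h p (h i)))"
      by (subst prod.reindex[OF h]) (simp add: o_def)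
    also have "\<dots> = (\<Prod>i\<in>S. A (h i) (h (p i)))"
      by (rule prod.cong[OF refl]) (simp add: map_permutation_apply[OF h])
    finally show "of_int (sign (map_permutation S h p)) * (\<Prod>y\<in>h ` S. A y (map_permutation S h p y))
      = of_int (sign p) * (\<Prod>i\<in>S. A (h i) (h (p i)))"
      using sign_map_permutation[OF h p S] by simp
  next
    fix q assume "q \<in> {p. p permutes h ` S}"
    hence q: "q permutes h ` S" by simp
    show "map_permutation S h (map_permutation (h ` S) (inv_into S h) q) = q"
      by (rule map_permutation_compose_inv[OF bh' q]) (simp add: f_inv_into_f)
    show "map_permutation (h ` S) (inv_into S h) q \<in> {p. p permutes S}"
      using map_permutation_permutes[OF bh' q] by simp
  qed
qed

lemma det_on_permute_rows:
  assumes S: "finite S" and q: "q permutes S"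
  shows "det_on (\<lambda>i j. B (q i) j) S = of_int (sign q) * det_on B S"
proof -
  have "det_on (\<lambda>i j. B (q i) j) S
      = (\<Sum>p | p permutes S. of_int (sign (p \<circ> q)) * (\<Prod>i\<in>S. B (q i) ((p \<circ> q) i)))"
    unfolding det_on_def by (rule sum_permutations_compose_right[OF q])
  also have "\<dots> = (\<Sum>p | p permutes S. of_int (sign q) * (of_int (sign p) * (\<Prod>i\<in>S. B i (p i))))"
  proof (rule sum.cong[OF refl])
    fix p assume "p \<in> {p. p permutes S}"
    hence p: "p permutes S" by simp
    have "(\<Prod>i\<in>S. B (q i) ((p \<circ> q) i)) = (\<Prod>i\<in>S. B i (p i))"
      using prod.permute[OF q, of "\<lambda>i. B i (p i)"] by (simp add: o_def)
    moreover have "sign (p \<circ> q) = sign p * sign q"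
      by (rule sign_compose[OF permutes_imp_permutation[OF S p] permutes_imp_permutation[OF S q]])
    ultimately show "of_int (sign (p \<circ> q)) * (\<Prod>i\<in>S. B (q i) ((p \<circ> q) i))
       = of_int (sign q) * (of_int (sign p) * (\<Prod>i\<in>S. B i (p i)))" by simp
  qed
  also have "\<dots> = of_int (sign q) * det_on B S" unfolding det_on_def by (simp add: sum_distrib_left)
  finally show ?thesis .
qed

lemma det_on_identical_rows:
  fixes A :: "'a \<Rightarrow> 'a \<Rightarrow> 'b::linordered_idom"
  assumes S: "finite S" and ij: "i \<in> S" "j \<in> S" "i \<noteq> j"
    and eq: "\<And>k. k \<in> S \<Longrightarrow> A i k = A j k"
  shows "det_on A S = 0"
proof -
  let ?t = "Transposition.transpose i j"
  have t: "?t permutes S" using ij by (simp add: permutes_swap_id)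
  have "det_on A S = det_on (\<lambda>k l. A (?t k) l) S"
    by (rule det_on_cong) (use eq in \<open>auto simp: Transposition.transpose_def\<close>)
  also have "\<dots> = - det_on A S"
    using det_on_permute_rows[OF S t, of A] ij by (simp add: sign_swap_id)
  finally show ?thesis by simp
qed

lemma det_on_zero_row:
  assumes S: "finite S" and i0: "i0 \<in> S" and zero: "\<And>j. j \<in> S \<Longrightarrow> A i0 j = 0"
  shows "det_on A S = 0"
  unfolding det_on_def
proof (rule sum.neutral, safe)
  fix p assume p: "p permutes S"
  have "A i0 (p i0) = 0" using zero permutes_in_image[OF p] i0 by simp
  hence "(\<Prod>i\<in>S. A i (p i)) = 0" using S i0 by (intro prod_zero) auto
  thus "of_int (sign p) * (\<Prod>i\<in>S. A i (p i)) = 0" by simp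
qed

lemma det_on_row_linear:
  assumes S: "finite S" and K: "finite K" and i0: "i0 \<in> S"
  shows "det_on (A(i0 := (\<lambda>j. \<Sum>k\<in>K. c k * B k j))) S = (\<Sum>k\<in>K. c k * det_on (A(i0 := B k)) S)"
proof -
  have row: "(\<Prod>i\<in>S. (A(i0 := r)) i (p i)) = r (p i0) * (\<Prod>i\<in>S-{i0}. A i (p i))" for r p
  proof -
    have "(\<Prod>i\<in>S-{i0}. (A(i0 := r)) i (p i)) = (\<Prod>i\<in>S-{i0}. A i (p i))"
      by (rule prod.cong) auto
    thus ?thesis using prod.remove[OF S i0, of "\<lambda>i. (A(i0 := r)) i (p i)"] by simp
  qed
  have "det_on (A(i0 := (\<lambda>j. \<Sum>k\<in>K. c k * B k j))) S
      = (\<Sum>p | p permutes S. \<Sum>k\<in>K. c k * (of_int (sign p) * (B k (p i0) * (\<Prod>i\<in>S-{i0}. A i (p i)))))"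
    unfolding det_on_def row
    by (intro sum.cong refl) (simp add: sum_distrib_left sum_distrib_right mult_ac)
  also have "\<dots> = (\<Sum>k\<in>K. \<Sum>p | p permutes S. c k * (of_int (sign p) * (B k (p i0) * (\<Prod>i\<in>S-{i0}. A i (p i)))))"
    by (rule sum.swap)
  also have "\<dots> = (\<Sum>k\<in>K. c k * det_on (A(i0 := B k)) S)"
    unfolding det_on_def row by (simp add: sum_distrib_left)
  finally show ?thesis .
qed

lemma det_on_dependent_rows:
  fixes A :: "'a \<Rightarrow> 'a \<Rightarrow> 'b::linordered_idom"
  assumes S: "finite S" and i0: "i0 \<in> S" and c: "c i0 \<noteq> 0"
    and dep: "\<And>j. j \<in> S \<Longrightarrow> (\<Sum>i\<in>S. c i * A i j) = 0"
  shows "det_on A S = 0"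
proof -
  have row: "c k * det_on (A(i0 := A k)) S = (if k = i0 then c i0 * det_on A S else 0)"
    if "k \<in> S" for k
    using det_on_identical_rows[OF S i0 that, of "A(i0 := A k)"] by (cases "k = i0") auto
  have "c i0 * det_on A S = (\<Sum>k\<in>S. if k = i0 then c i0 * det_on A S else 0)"
    using S i0 by simp
  also have "\<dots> = (\<Sum>k\<in>S. c k * det_on (A(i0 := A k)) S)"
    by (rule sum.cong[OF refl row, symmetric])
  also have "\<dots> = det_on (A(i0 := (\<lambda>j. \<Sum>k\<in>S. c k * A k j))) S"
    by (rule det_on_row_linear[OF S S i0, symmetric])
  also have "\<dots> = 0" by (rule det_on_zero_row[OF S i0]) (simp add: dep)
  finally show ?thesis using c by simp
qed

lemma det_on_dependent_columns:
  fixes A :: "'a \<Rightarrow> 'a \<Rightarrow> 'b::linordered_idom"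
  assumes S: "finite S" and j0: "j0 \<in> S" and c: "c j0 \<noteq> 0"
    and dep: "\<And>i. i \<in> S \<Longrightarrow> (\<Sum>j\<in>S. A i j * c j) = 0"
  shows "det_on A S = 0"
proof -
  have "det_on (\<lambda>i j. A j i) S = 0"
    by (rule det_on_dependent_rows[of S j0 c "\<lambda>i j. A j i"])
       (use S j0 c dep in \<open>simp_all add: mult.commute\<close>)
  thus ?thesis using det_on_transpose[OF S, of A] by simp
qed

lemma det_on_uminus: "det_on (\<lambda>i j. - A i j) S = (-1) ^ card S * det_on A S"
  unfolding det_on_def by (simp add: prod_uminus sum_distrib_left mult_ac)

lemma det_on_of_int: "det_on (\<lambda>i j. of_int (A i j)) S = of_int (det_on A S)"
  unfolding det_on_def by (simp add: of_int_sum of_int_prod)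

lemma det_on_unit_columns:
  assumes S: "finite S" and RS: "R \<subseteq> S"
    and unit: "\<And>i j. i \<in> S \<Longrightarrow> j \<in> S - R \<Longrightarrow> Q i j = (if i = j then 1 else 0)"
  shows "det_on Q S = det_on Q R"
proof -
  let ?F = "\<lambda>p. of_int (sign p) * (\<Prod>i\<in>S. Q i (p i))"
  have "det_on Q S = (\<Sum>p | p permutes R. ?F p)"
    unfolding det_on_def
  proof (rule sum.mono_neutral_right)
    show "finite {p. p permutes S}" using S by (rule finite_permutations)
    show "{p. p permutes R} \<subseteq> {p. p permutes S}" using RS by (auto intro: permutes_subset)
    show "\<forall>p\<in>{p. p permutes S} - {p. p permutes R}. ?F p = 0"
    proof
      fix p assume p: "p \<in> {p. p permutes S} - {p. p permutes R}"
      hence pS: "p permutes S" by simp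
      obtain x where x: "x \<in> S - R" "p x \<noteq> x"
        using p RS unfolding permutes_def by blast
      let ?i = "inv_into UNIV p x"
      have pi: "p ?i = x" by (rule permutes_inverses(1)[OF pS])
      have iS: "?i \<in> S" using permutes_in_image[OF permutes_inv[OF pS]] x by simp
      have "Q ?i (p ?i) = 0" using unit[OF iS] x pi by auto
      hence "(\<Prod>i\<in>S. Q i (p i)) = 0" using iS S by (intro prod_zero) auto
      thus "?F p = 0" by simp
    qed
  qed
  also have "\<dots> = det_on Q R"
    unfolding det_on_def
  proof (rule sum.cong[OF refl])
    fix p assume "p \<in> {p. p permutes R}"
    hence p: "p permutes R" by simp
    have "(\<Prod>i\<in>S. Q i (p i)) = (\<Prod>i\<in>R. Q i (p i)) * (\<Prod>i\<in>S-R. Q i (p i))"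
      using prod.subset_diff[OF RS S, of "\<lambda>i. Q i (p i)"] by (simp only: mult.commute)
    also have "(\<Prod>i\<in>S-R. Q i (p i)) = 1"
      by (rule prod.neutral) (use unit permutes_not_in[OF p] in auto)
    finally show "?F p = of_int (sign p) * (\<Prod>i\<in>R. Q i (p i))" by simp
  qed
  finally show ?thesis .
qed

lemma det_on_identity: "finite S \<Longrightarrow> det_on (\<lambda>i j. if i = j then 1 else 0) S = 1"
  using det_on_unit_columns[of S "{}" "\<lambda>i j. if i = j then 1 else 0"]
  by (simp add: det_on_def permutes_empty)

lemma det_on_exchange_matrix:
  assumes T: "finite T" and RT: "R \<subseteq> T" and h: "bij_betw h C R"
  shows "det_on (\<lambda>k f. if f \<in> R then - X (inv_into C h f) k else if k = f then 1 else 0) T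
       = (-1) ^ card R * det_on (\<lambda>i j. X i (h j)) C"
proof -
  have finR: "finite R" using RT T by (rule finite_subset)
  have finC: "finite C" using bij_betw_finite[OF h] finR by simp
  have hC: "h ` C = R" and hinj: "inj_on h C" using h by (auto simp: bij_betw_def)
  have "det_on (\<lambda>k f. if f \<in> R then - X (inv_into C h f) k else if k = f then 1 else 0) T
      = det_on (\<lambda>k f. if f \<in> R then - X (inv_into C h f) k else if k = f then 1 else 0) R"
    by (rule det_on_unit_columns[OF T RT]) auto
  also have "\<dots> = det_on (\<lambda>k f. - X (inv_into C h f) k) R"
    by (rule det_on_cong) simp
  also have "\<dots> = (-1) ^ card R * det_on (\<lambda>k f. X (inv_into C h f) k) R"
    by (rule det_on_uminus)
  also have "det_on (\<lambda>k f. X (inv_into C h f) k) R = det_on (\<lambda>f k. X (inv_into C h f) k) R"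
    by (rule det_on_transpose[OF finR])
  also have "det_on (\<lambda>f k. X (inv_into C h f) k) R = det_on (\<lambda>i j. X (inv_into C h (h i)) (h j)) C"
    using det_on_reindex[OF finC hinj, of "\<lambda>f k. X (inv_into C h f) k"] hC by simp
  also have "\<dots> = det_on (\<lambda>i j. X i (h j)) C"
    by (rule det_on_cong) (simp add: inv_into_f_f[OF hinj])
  finally show ?thesis .
qed

lemma det_on_diagonal_plus:
  assumes S: "finite S"
  shows "det_on (\<lambda>i j. (if i = j then d i else 0) + X i j) S
       = (\<Sum>T\<in>Pow S. (\<Prod>i\<in>S-T. d i) * det_on X T)"
proof -
  let ?D = "\<lambda>i j. if i = j then d i else 0"
  let ?F = "\<lambda>T p. of_int (sign p) * ((\<Prod>i\<in>T. X i (p i)) * (\<Prod>i\<in>S-T. ?D i (p i)))"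
  have "det_on (\<lambda>i j. ?D i j + X i j) S = (\<Sum>p | p permutes S. \<Sum>T\<in>Pow S. ?F T p)"
    unfolding det_on_def
    by (intro sum.cong refl)
       (simp add: add.commute[of "?D _ _"] prod_add[OF S] sum_distrib_left)
  also have "\<dots> = (\<Sum>T\<in>Pow S. \<Sum>p | p permutes S. ?F T p)" by (rule sum.swap)
  also have "\<dots> = (\<Sum>T\<in>Pow S. (\<Prod>i\<in>S-T. d i) * det_on X T)"
  proof (rule sum.cong[OF refl])
    fix T assume "T \<in> Pow S"
    hence TS: "T \<subseteq> S" by simp
    have "(\<Sum>p | p permutes S. ?F T p) = (\<Sum>p | p permutes T. ?F T p)"
    proof (rule sum.mono_neutral_right)
      show "finite {p. p permutes S}" using S by (rule finite_permutations)
      show "{p. p permutes T} \<subseteq> {p. p permutes S}" using TS by (auto intro: permutes_subset)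
      show "\<forall>p\<in>{p. p permutes S} - {p. p permutes T}. ?F T p = 0"
      proof
        fix p assume p: "p \<in> {p. p permutes S} - {p. p permutes T}"
        then obtain x where "x \<in> S - T" "p x \<noteq> x"
          using TS unfolding permutes_def by blast
        hence "(\<Prod>i\<in>S-T. ?D i (p i)) = 0" using S by (intro prod_zero) (auto intro!: bexI[of _ x])
        thus "?F T p = 0" by simp
      qed
    qed
    also have "\<dots> = (\<Sum>p | p permutes T. (\<Prod>i\<in>S-T. d i) * (of_int (sign p) * (\<Prod>i\<in>T. X i (p i))))"
    proof (rule sum.cong[OF refl])
      fix p assume "p \<in> {p. p permutes T}"
      hence "(\<Prod>i\<in>S-T. ?D i (p i)) = (\<Prod>i\<in>S-T. d i)"
        by (intro prod.cong refl) (simp add: permutes_not_in)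
      thus "?F T p = (\<Prod>i\<in>S-T. d i) * (of_int (sign p) * (\<Prod>i\<in>T. X i (p i)))" by (simp add: mult_ac)
    qed
    also have "\<dots> = (\<Prod>i\<in>S-T. d i) * det_on X T" by (simp add: det_on_def sum_distrib_left)
    finally show "(\<Sum>p | p permutes S. ?F T p) = (\<Prod>i\<in>S-T. d i) * det_on X T" .
  qed
  finally show ?thesis .
qed

lemma det_on_mult_expand:
  assumes S: "finite S" and K: "finite K"
  shows "det_on (\<lambda>i j. \<Sum>k\<in>K. A i k * B k j) S
     = (\<Sum>g\<in>S \<rightarrow>\<^sub>E K. (\<Prod>i\<in>S. A i (g i)) * det_on (\<lambda>i j. B (g i) j) S)"
proof -
  have "det_on (\<lambda>i j. \<Sum>k\<in>K. A i k * B k j) S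
     = (\<Sum>p | p permutes S. of_int (sign p) * (\<Sum>g\<in>S \<rightarrow>\<^sub>E K. \<Prod>i\<in>S. A i (g i) * B (g i) (p i)))"
    unfolding det_on_def by (subst prod_sum_PiE[OF S]) (use K in auto)
  also have "\<dots> = (\<Sum>p | p permutes S. \<Sum>g\<in>S \<rightarrow>\<^sub>E K.
      (\<Prod>i\<in>S. A i (g i)) * (of_int (sign p) * (\<Prod>i\<in>S. B (g i) (p i))))"
    by (intro sum.cong refl) (simp add: sum_distrib_left prod.distrib mult_ac)
  also have "\<dots> = (\<Sum>g\<in>S \<rightarrow>\<^sub>E K. \<Sum>p | p permutes S.
      (\<Prod>i\<in>S. A i (g i)) * (of_int (sign p) * (\<Prod>i\<in>S. B (g i) (p i))))"
    by (rule sum.swap)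
  also have "\<dots> = (\<Sum>g\<in>S \<rightarrow>\<^sub>E K. (\<Prod>i\<in>S. A i (g i)) * det_on (\<lambda>i j. B (g i) j) S)"
    unfolding det_on_def by (simp add: sum_distrib_left)
  finally show ?thesis .
qed

lemma det_on_mult_expand_inj:
  fixes A :: "'a \<Rightarrow> 'k \<Rightarrow> 'b::linordered_idom"
  assumes S: "finite S" and K: "finite K"
  shows "det_on (\<lambda>i j. \<Sum>k\<in>K. A i k * B k j) S
     = (\<Sum>g | g \<in> S \<rightarrow>\<^sub>E K \<and> inj_on g S. (\<Prod>i\<in>S. A i (g i)) * det_on (\<lambda>i j. B (g i) j) S)"
  unfolding det_on_mult_expand[OF S K]
proof (rule sum.mono_neutral_right)
  show "finite (S \<rightarrow>\<^sub>E K)" using S K by (simp add: finite_PiE)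
  show "\<forall>g\<in>(S \<rightarrow>\<^sub>E K) - {g. g \<in> S \<rightarrow>\<^sub>E K \<and> inj_on g S}.
      (\<Prod>i\<in>S. A i (g i)) * det_on (\<lambda>i j. B (g i) j) S = 0"
  proof
    fix g assume "g \<in> (S \<rightarrow>\<^sub>E K) - {g. g \<in> S \<rightarrow>\<^sub>E K \<and> inj_on g S}"
    then obtain i j where "i \<in> S" "j \<in> S" "i \<noteq> j" "g i = g j" by (auto simp: inj_on_def)
    hence "det_on (\<lambda>i j. B (g i) j) S = 0" by (intro det_on_identical_rows[OF S, of i j]) auto
    thus "(\<Prod>i\<in>S. A i (g i)) * det_on (\<lambda>i j. B (g i) j) S = 0" by simp
  qed
qed auto

lemma permutes_if_injection:
  assumes S: "finite S" and h: "bij_betw h S R" and g: "g \<in> S \<rightarrow>\<^sub>E R" "inj_on g S"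
  shows "(\<lambda>x. if x \<in> S then inv_into S h (g x) else x) permutes S"
proof -
  have "card (g ` S) = card R"
    using g(2) h by (simp add: card_image bij_betw_same_card)
  hence "g ` S = R"
    using g(1) S h by (intro card_subset_eq) (auto simp: bij_betw_def)
  hence "bij_betw g S R" using g(2) by (simp add: bij_betw_def)
  hence "bij_betw (inv_into S h \<circ> g) S S" by (rule bij_betw_trans[OF _ bij_betw_inv_into[OF h]])
  hence "bij_betw (\<lambda>x. if x \<in> S then inv_into S h (g x) else x) S S"
    by (rule bij_betw_cong[THEN iffD1, rotated]) simp
  thus ?thesis by (simp add: bij_imp_permutes)
qed

lemma bij_betw_permutes_injections:
  assumes S: "finite S" and h: "bij_betw h S R"
  shows "bij_betw (\<lambda>q. restrict (h \<circ> q) S) {q. q permutes S} {g. g \<in> S \<rightarrow>\<^sub>E R \<and> inj_on g S}"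
proof (rule bij_betw_byWitness[where f'="\<lambda>g x. if x \<in> S then inv_into S h (g x) else x"])
  have hinj: "inj_on h S" and hS: "h ` S = R" using h by (auto simp: bij_betw_def)
  show "\<forall>q\<in>{q. q permutes S}. (\<lambda>x. if x \<in> S then inv_into S h (restrict (h \<circ> q) S x) else x) = q"
  proof safe
    fix q assume q: "q permutes S"
    show "(\<lambda>x. if x \<in> S then inv_into S h (restrict (h \<circ> q) S x) else x) = q"
    proof
      fix x show "(if x \<in> S then inv_into S h (restrict (h \<circ> q) S x) else x) = q x"
        using q by (cases "x \<in> S")
          (simp_all add: permutes_in_image permutes_not_in inv_into_f_f[OF hinj])
    qed
  qed
  show "\<forall>g\<in>{g. g \<in> S \<rightarrow>\<^sub>E R \<and> inj_on g S}.
      restrict (h \<circ> (\<lambda>x. if x \<in> S then inv_into S h (g x) else x)) S = g"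
  proof
    fix g assume g: "g \<in> {g. g \<in> S \<rightarrow>\<^sub>E R \<and> inj_on g S}"
    show "restrict (h \<circ> (\<lambda>x. if x \<in> S then inv_into S h (g x) else x)) S = g"
    proof
      fix x show "restrict (h \<circ> (\<lambda>x. if x \<in> S then inv_into S h (g x) else x)) S x = g x"
      proof (cases "x \<in> S")
        case True
        hence "g x \<in> h ` S" using g hS by blast
        thus ?thesis using True by (simp add: f_inv_into_f)
      next
        case False thus ?thesis using g by (auto simp: PiE_def extensional_def)
      qed
    qed
  qed
  show "(\<lambda>q. restrict (h \<circ> q) S) ` {q. q permutes S} \<subseteq> {g. g \<in> S \<rightarrow>\<^sub>E R \<and> inj_on g S}"
  proof
    fix g assume "g \<in> (\<lambda>q. restrict (h \<circ> q) S) ` {q. q permutes S}"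
    then obtain q where q: "q permutes S" and gq: "g = restrict (h \<circ> q) S" by blast
    have "restrict (h \<circ> q) S \<in> S \<rightarrow>\<^sub>E R"
      using q hS by (auto simp: permutes_in_image)
    moreover have "inj_on (h \<circ> q) S"
      using comp_inj_on[OF permutes_inj_on[OF q], of h S] permutes_image[OF q] hinj by simp
    ultimately show "g \<in> {g. g \<in> S \<rightarrow>\<^sub>E R \<and> inj_on g S}" unfolding gq by (simp add: inj_on_def)
  qed
  show "(\<lambda>g x. if x \<in> S then inv_into S h (g x) else x) ` {g. g \<in> S \<rightarrow>\<^sub>E R \<and> inj_on g S}
      \<subseteq> {q. q permutes S}"
    using permutes_if_injection[OF S h] by blast
qed
lemma det_on_mult_bij:
  fixes A :: "'a \<Rightarrow> 'k \<Rightarrow> 'b::linordered_idom" and B :: "'k \<Rightarrow> 'a \<Rightarrow> 'b"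
  assumes S: "finite S" and h: "bij_betw h S R"
  shows "(\<Sum>g | g \<in> S \<rightarrow>\<^sub>E R \<and> inj_on g S. (\<Prod>i\<in>S. A i (g i)) * det_on (\<lambda>i j. B (g i) j) S)
       = det_on (\<lambda>i j. A i (h j)) S * det_on (\<lambda>i j. B (h i) j) S"
proof -
  let ?dB = "det_on (\<lambda>i j. B (h i) j) S"
  have "(\<Sum>g | g \<in> S \<rightarrow>\<^sub>E R \<and> inj_on g S. (\<Prod>i\<in>S. A i (g i)) * det_on (\<lambda>i j. B (g i) j) S)
      = (\<Sum>q | q permutes S. (\<Prod>i\<in>S. A i (restrict (h \<circ> q) S i))
          * det_on (\<lambda>i j. B (restrict (h \<circ> q) S i) j) S)"
    by (rule sum.reindex_bij_betw[OF bij_betw_permutes_injections[OF S h], symmetric])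
  also have "\<dots> = (\<Sum>q | q permutes S. of_int (sign q) * (\<Prod>i\<in>S. A (inv_into UNIV q i) (h i))) * ?dB"
    unfolding sum_distrib_right
  proof (rule sum.cong[OF refl])
    fix q assume "q \<in> {q. q permutes S}"
    hence q: "q permutes S" by simp
    have "det_on (\<lambda>i j. B (restrict (h \<circ> q) S i) j) S = det_on (\<lambda>i j. B (h (q i)) j) S"
      by (rule det_on_cong) simp
    also have "\<dots> = of_int (sign q) * ?dB" by (rule det_on_permute_rows[OF S q])
    finally have "det_on (\<lambda>i j. B (restrict (h \<circ> q) S i) j) S = of_int (sign q) * ?dB" .
    moreover have "(\<Prod>i\<in>S. A i (restrict (h \<circ> q) S i)) = (\<Prod>i\<in>S. A (inv_into UNIV q i) (h i))"
      using prod.permute[OF q, of "\<lambda>i. A (inv_into UNIV q i) (h i)"]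
      by (simp add: o_def permutes_inverses(2)[OF q])
    ultimately show "(\<Prod>i\<in>S. A i (restrict (h \<circ> q) S i)) * det_on (\<lambda>i j. B (restrict (h \<circ> q) S i) j) S
        = of_int (sign q) * (\<Prod>i\<in>S. A (inv_into UNIV q i) (h i)) * ?dB"
      by (simp add: mult_ac)
  qed
  also have "(\<Sum>q | q permutes S. of_int (sign q) * (\<Prod>i\<in>S. A (inv_into UNIV q i) (h i)))
      = det_on (\<lambda>i j. A j (h i)) S"
  proof -
    have "sign (inv_into UNIV q) = sign q" if "q permutes S" for q
      using sign_inverse permutes_imp_permutation[OF S that] by blast
    hence "(\<Sum>q | q permutes S. of_int (sign q) * (\<Prod>i\<in>S. A (inv_into UNIV q i) (h i)))
        = (\<Sum>q | q permutes S. of_int (sign (inv_into UNIV q)) * (\<Prod>i\<in>S. A (inv_into UNIV q i) (h i)))"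
      by (intro sum.cong) auto
    also have "\<dots> = det_on (\<lambda>i j. A j (h i)) S"
      unfolding det_on_def by (rule sum_permutations_inverse[symmetric])
    finally show ?thesis .
  qed
  also have "\<dots> = det_on (\<lambda>i j. A i (h j)) S"
    using det_on_transpose[OF S, of "\<lambda>i j. A i (h j)"] by simp
  finally show ?thesis .
qed

lemma det_on_mult:
  fixes A B :: "'a \<Rightarrow> 'a \<Rightarrow> 'b::linordered_idom"
  assumes S: "finite S"
  shows "det_on (\<lambda>i j. \<Sum>k\<in>S. A i k * B k j) S = det_on A S * det_on B S"
  using det_on_mult_expand_inj[OF S S, of A B] det_on_mult_bij[OF S bij_betw_id, of A B] by simp

theorem det_on_Cauchy_Binet:
  fixes A :: "'a \<Rightarrow> 'k \<Rightarrow> 'b::linordered_idom" and B :: "'k \<Rightarrow> 'a \<Rightarrow> 'b"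
  assumes S: "finite S" and K: "finite K"
    and h: "\<And>R. R \<subseteq> K \<Longrightarrow> card R = card S \<Longrightarrow> bij_betw (h R) S R"
  shows "det_on (\<lambda>i j. \<Sum>k\<in>K. A i k * B k j) S
     = (\<Sum>R | R \<subseteq> K \<and> card R = card S. det_on (\<lambda>i j. A i (h R j)) S * det_on (\<lambda>i j. B (h R i) j) S)"
proof -
  let ?I = "{g. g \<in> S \<rightarrow>\<^sub>E K \<and> inj_on g S}"
  let ?T = "{R. R \<subseteq> K \<and> card R = card S}"
  let ?F = "\<lambda>g. (\<Prod>i\<in>S. A i (g i)) * det_on (\<lambda>i j. B (g i) j) S"
  have "det_on (\<lambda>i j. \<Sum>k\<in>K. A i k * B k j) S = sum ?F ?I" by (rule det_on_mult_expand_inj[OF S K])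
  also have "\<dots> = (\<Sum>R\<in>?T. sum ?F {g \<in> ?I. g ` S = R})"
  proof (rule sum.group[symmetric])
    show "finite ?I" using S K by (auto simp: finite_PiE)
    show "finite ?T" using K by (auto intro: finite_subset[of _ "Pow K"])
    show "(\<lambda>g. g ` S) ` ?I \<subseteq> ?T" using S by (auto simp: card_image)
  qed
  also have "\<dots> = (\<Sum>R\<in>?T. det_on (\<lambda>i j. A i (h R j)) S * det_on (\<lambda>i j. B (h R i) j) S)"
  proof (rule sum.cong[OF refl])
    fix R assume "R \<in> ?T"
    hence RK: "R \<subseteq> K" and cR: "card R = card S" by auto
    have "{g \<in> ?I. g ` S = R} = {g. g \<in> S \<rightarrow>\<^sub>E R \<and> inj_on g S}"
    proof (intro equalityI subsetI)
      fix g assume "g \<in> {g. g \<in> S \<rightarrow>\<^sub>E R \<and> inj_on g S}"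
      hence "g ` S \<subseteq> R" "card (g ` S) = card R" "inj_on g S" "g \<in> S \<rightarrow>\<^sub>E R"
        using cR by (auto simp: card_image)
      moreover have "finite R" using RK K by (rule finite_subset)
      ultimately show "g \<in> {g \<in> ?I. g ` S = R}" using RK by (auto simp: card_subset_eq PiE_def)
    qed (auto simp: PiE_def)
    thus "sum ?F {g \<in> ?I. g ` S = R} = det_on (\<lambda>i j. A i (h R j)) S * det_on (\<lambda>i j. B (h R i) j) S"
      using det_on_mult_bij[OF S h[OF RK cR]] by simp
  qed
  finally show ?thesis .
qed

lemma det_mat_eq_det_on: "det (mat n n (\<lambda>(i, j). A i j)) = det_on A {0..<n}"
  unfolding det_def det_on_def
  by (auto intro!: sum.cong prod.cong simp: permutes_in_image)

lemma det_mat_nth_eq_det_on: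
  assumes "distinct xs"
  shows "det (mat (length xs) (length xs) (\<lambda>(i, j). A (xs ! i) (xs ! j))) = det_on A (set xs)"
proof -
  have "det (mat (length xs) (length xs) (\<lambda>(i, j). A (xs ! i) (xs ! j)))
      = det_on (\<lambda>i j. A (xs ! i) (xs ! j)) {0..<length xs}"
    by (rule det_mat_eq_det_on)
  also have "\<dots> = det_on A ((!) xs ` {0..<length xs})"
    by (rule det_on_reindex) (use assms in \<open>auto simp: inj_on_nth\<close>)
  also have "(!) xs ` {0..<length xs} = set xs" by (auto simp: set_conv_nth)
  finally show ?thesis .
qed

definition incidence :: "('e \<Rightarrow> 'v \<times> 'v) \<Rightarrow> 'v \<Rightarrow> 'e \<Rightarrow> int" where
  "incidence ends v e = (if v = snd (ends e) then 1 else 0) - (if v = fst (ends e) then 1 else 0)"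

definition walk_chain :: "('e \<Rightarrow> 'v \<times> 'v) \<Rightarrow> 'v list \<Rightarrow> 'e list \<Rightarrow> 'e \<Rightarrow> int" where
  "walk_chain ends vs es x =
    (\<Sum>i<length es. if es ! i = x then (if ends x = (vs ! i, vs ! Suc i) then 1 else -1) else 0)"

definition walk :: "('e \<Rightarrow> 'v \<times> 'v) \<Rightarrow> 'e set \<Rightarrow> 'v list \<Rightarrow> 'e list \<Rightarrow> bool" where
  "walk ends F vs es \<longleftrightarrow> length vs = Suc (length es) \<and> set es \<subseteq> F \<and>
      (\<forall>i<length es. joins ends (es ! i) (vs ! i) (vs ! Suc i))"

definition simple_path :: "('e \<Rightarrow> 'v \<times> 'v) \<Rightarrow> 'e set \<Rightarrow> 'v list \<Rightarrow> 'e list \<Rightarrow> bool" where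
  "simple_path ends F vs es \<longleftrightarrow> walk ends F vs es \<and> distinct vs"

lemma is_path_iff_simple_path:
  "is_path ends F vs es a b \<longleftrightarrow> simple_path ends F vs es \<and> hd vs = a \<and> last vs = b"
  unfolding is_path_def simple_path_def walk_def by auto

lemma joins_commute: "joins ends e a b \<longleftrightarrow> joins ends e b a"
  unfolding joins_def by auto

lemma joins_cases:
  "joins ends e a b \<Longrightarrow> joins ends e c d \<Longrightarrow> (a = c \<and> b = d) \<or> (a = d \<and> b = c)"
  unfolding joins_def by auto

lemma joins_other_end: "joins ends e a b \<Longrightarrow> joins ends e a c \<Longrightarrow> b = c"
  unfolding joins_def by auto

lemma has_cycle_mono: "has_cycle ends F \<Longrightarrow> F \<subseteq> F' \<Longrightarrow> has_cycle ends F'"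
  unfolding has_cycle_def by blast

lemma has_cycle_if_loop:
  assumes "e \<in> F" "fst (ends e) = snd (ends e)"
  shows "has_cycle ends F"
  unfolding has_cycle_def
  by (rule exI[of _ "[fst (ends e), fst (ends e)]"], rule exI[of _ "[e]"])
     (use assms in \<open>auto simp: joins_def prod_eq_iff\<close>)

lemma incidence_traversed:
  assumes "joins ends e a b"
  shows "incidence ends v e * (if ends e = (a, b) then 1 else -1)
       = (if v = b then 1 else 0) - (if v = a then 1 else 0)"
  using assms unfolding joins_def incidence_def by (cases "ends e") auto

lemma boundary_walk_chain:
  assumes w: "walk ends F vs es" and F: "finite F"
  shows "(\<Sum>x\<in>F. incidence ends v x * walk_chain ends vs es x)
       = (if v = last vs then 1 else 0) - (if v = hd vs then 1 else 0)"
proof -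
  let ?s = "\<lambda>i x. (if ends x = (vs ! i, vs ! Suc i) then 1 else -1) :: int"
  let ?at = "\<lambda>k. if v = vs ! k then 1 else 0 :: int"
  have len: "length vs = Suc (length es)" and sub: "set es \<subseteq> F"
    and j: "\<And>i. i < length es \<Longrightarrow> joins ends (es ! i) (vs ! i) (vs ! Suc i)"
    using w unfolding walk_def by auto
  have "(\<Sum>x\<in>F. incidence ends v x * walk_chain ends vs es x)
      = (\<Sum>i<length es. \<Sum>x\<in>F. if es ! i = x then incidence ends v x * ?s i x else 0)"
    unfolding walk_chain_def sum_distrib_left
    by (subst sum.swap) (intro sum.cong refl, auto)
  also have "\<dots> = (\<Sum>i<length es. incidence ends v (es ! i) * ?s i (es ! i))"
    using F nth_mem[THEN subsetD[OF sub]] by (intro sum.cong refl) (simp add: sum.delta)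
  also have "\<dots> = (\<Sum>i<length es. ?at (Suc i) - ?at i)"
    using incidence_traversed[OF j] by simp
  also have "\<dots> = ?at (length es) - ?at 0"
    by (rule sum_lessThan_telescope)
  moreover have "vs \<noteq> []" using len by auto
  hence "last vs = vs ! length es" "hd vs = vs ! 0" using len by (simp_all add: last_conv_nth hd_conv_nth)
  ultimately show ?thesis by simp
qed

lemma walk_chain_nth:
  assumes "distinct es" and "i < length es"
  shows "walk_chain ends vs es (es ! i) = (if ends (es ! i) = (vs ! i, vs ! Suc i) then 1 else -1)"
proof -
  have "walk_chain ends vs es (es ! i)
      = (\<Sum>k<length es. if k = i then (if ends (es ! i) = (vs ! i, vs ! Suc i) then 1 else -1) else 0)"
    unfolding walk_chain_def
    by (rule sum.cong[OF refl]) (use assms in \<open>auto simp: nth_eq_iff_index_eq\<close>)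
  thus ?thesis using assms(2) by simp
qed

lemma walk_chain_eq_0: "x \<notin> set es \<Longrightarrow> walk_chain ends vs es x = 0"
  unfolding walk_chain_def by (rule sum.neutral) auto

lemma walk_chain_eq_0_iff:
  assumes "distinct es"
  shows "walk_chain ends vs es x = 0 \<longleftrightarrow> x \<notin> set es"
proof
  assume "walk_chain ends vs es x = 0"
  thus "x \<notin> set es"
    using walk_chain_nth[OF assms, of _ ends vs] by (auto simp: in_set_conv_nth split: if_splits)
qed (rule walk_chain_eq_0)

lemma walk_vertices_subset:
  assumes w: "walk ends F vs es" and ne: "es \<noteq> []"
    and FV: "\<forall>e\<in>F. fst (ends e) \<in> V \<and> snd (ends e) \<in> V"
  shows "set vs \<subseteq> V"
proof
  fix v assume "v \<in> set vs"
  then obtain i where i: "i < length vs" "vs ! i = v" by (auto simp: in_set_conv_nth)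
  have len: "length vs = Suc (length es)" and sub: "set es \<subseteq> F"
    and j: "\<And>i. i < length es \<Longrightarrow> joins ends (es ! i) (vs ! i) (vs ! Suc i)"
    using w unfolding walk_def by auto
  obtain k where k: "k < length es" "i = k \<or> i = Suc k"
    using i(1) len ne by (cases "i < length es") (auto intro: that[of "length es - 1"])
  have "es ! k \<in> F" using sub k(1) by auto
  thus "v \<in> V" using j[OF k(1)] FV i(2) k(2) unfolding joins_def by (cases "ends (es ! k)") auto
qed

lemma simple_path_distinct_edges:
  assumes "simple_path ends F vs es"
  shows "distinct es"
proof -
  have len: "length vs = Suc (length es)" and d: "distinct vs"
    and j: "\<And>i. i < length es \<Longrightarrow> joins ends (es ! i) (vs ! i) (vs ! Suc i)"
    using assms unfolding simple_path_def walk_def by auto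
  show ?thesis
  proof (rule distinct_conv_nth[THEN iffD2], intro allI impI notI)
    fix i k assume ik: "i < length es" "k < length es" "i \<noteq> k" and eq: "es ! i = es ! k"
    have "joins ends (es ! i) (vs ! k) (vs ! Suc k)" using j[OF ik(2)] eq by simp
    from joins_cases[OF j[OF ik(1)] this] show False
      using d ik len by (auto simp: nth_eq_iff_index_eq)
  qed
qed

lemma simple_path_ConsD:
  assumes "simple_path ends F (a # vs) (e # es)"
  shows "simple_path ends F vs es" "joins ends e a (hd vs)" "e \<in> F" "a \<notin> set vs" "vs \<noteq> []"
proof -
  have len: "length vs = Suc (length es)" using assms unfolding simple_path_def walk_def by auto
  thus ne: "vs \<noteq> []" by auto
  have j: "\<And>i. i < Suc (length es) \<Longrightarrow> joins ends ((e # es) ! i) ((a # vs) ! i) ((a # vs) ! Suc i)"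
    using assms unfolding simple_path_def walk_def by auto
  show "simple_path ends F vs es" using assms j[of "Suc _"] unfolding simple_path_def walk_def by auto
  show "joins ends e a (hd vs)" using j[of 0] len by (simp add: hd_conv_nth[OF ne])
  show "e \<in> F" "a \<notin> set vs" using assms unfolding simple_path_def walk_def by auto
qed

lemma simple_path_Cons:
  assumes "simple_path ends F vs es" "joins ends e a (hd vs)" "e \<in> F" "a \<notin> set vs"
  shows "simple_path ends F (a # vs) (e # es)"
proof -
  have len: "length vs = Suc (length es)" using assms unfolding simple_path_def walk_def by auto
  have "joins ends ((e # es) ! i) ((a # vs) ! i) ((a # vs) ! Suc i)" if "i < Suc (length es)" for i
  proof (cases i)
    case 0 thus ?thesis using assms(2) len by (cases vs) auto
  next
    case (Suc k) thus ?thesis using assms(1) that unfolding simple_path_def walk_def by auto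
  qed
  thus ?thesis using assms len unfolding simple_path_def walk_def by auto
qed

lemma simple_path_unique_by_edges:
  assumes "simple_path ends F vs1 es1" "simple_path ends F vs2 es2"
    and "hd vs1 = hd vs2" "set es1 = set es2"
  shows "vs1 = vs2 \<and> es1 = es2"
  using assms
proof (induction es1 arbitrary: vs1 vs2 es2)
  case Nil
  hence "es2 = []" by simp
  with Nil show ?case unfolding simple_path_def walk_def by (cases vs1; cases vs2) auto
next
  case (Cons e es1)
  obtain a vs1' where v1: "vs1 = a # vs1'"
    using Cons.prems(1) unfolding simple_path_def walk_def by (cases vs1) auto
  obtain e2 es2' where e2: "es2 = e2 # es2'" using Cons.prems(4) by (cases es2) auto
  obtain vs2' where v2: "vs2 = a # vs2'"
    using Cons.prems(2,3) v1 unfolding simple_path_def walk_def by (cases vs2) auto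
  note t1 = simple_path_ConsD[OF Cons.prems(1)[unfolded v1]]
  note t2 = simple_path_ConsD[OF Cons.prems(2)[unfolded v2 e2]]
  have "e2 = e"
  proof (rule ccontr)
    assume "e2 \<noteq> e"
    hence "e2 \<in> set es1" using Cons.prems(4) e2 by auto
    then obtain i where i: "i < length es1" "es1 ! i = e2" by (auto simp: in_set_conv_nth)
    have "joins ends e2 (vs1' ! i) (vs1' ! Suc i)"
      using t1(1) i unfolding simple_path_def walk_def by auto
    from joins_cases[OF t2(2) this] show False
      using t1(1,4) i unfolding simple_path_def walk_def by auto
  qed
  have "hd vs2' = hd vs1'" using joins_other_end[OF t2(2)[unfolded \<open>e2 = e\<close>] t1(2)] .
  moreover have "set es1 = set es2'"
    using Cons.prems(4) e2 \<open>e2 = e\<close> simple_path_distinct_edges[OF Cons.prems(1)]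
      simple_path_distinct_edges[OF Cons.prems(2)] by auto
  ultimately have "vs1' = vs2' \<and> es1 = es2'" using Cons.IH[OF t1(1) t2(1)] by simp
  thus ?case using v1 v2 e2 \<open>e2 = e\<close> by simp
qed

lemma simple_path_snoc:
  assumes p: "simple_path ends F vs es" and e: "e \<in> F" "joins ends e (last vs) w"
    and w: "w \<notin> set vs"
  shows "simple_path ends F (vs @ [w]) (es @ [e])"
proof -
  have len: "length vs = Suc (length es)"
    and j: "\<And>i. i < length es \<Longrightarrow> joins ends (es ! i) (vs ! i) (vs ! Suc i)"
    using p unfolding simple_path_def walk_def by auto
  have "joins ends ((es @ [e]) ! i) ((vs @ [w]) ! i) ((vs @ [w]) ! Suc i)"
    if "i < length (es @ [e])" for i
  proof (cases "i < length es")
    case True thus ?thesis using j[OF True] len by (auto simp: nth_append)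
  next
    case False
    hence "i = length es" using that by simp
    thus ?thesis using e(2) len by (cases vs rule: rev_cases) (auto simp: nth_append)
  qed
  thus ?thesis using len p e(1) w unfolding simple_path_def walk_def by auto
qed

lemma simple_path_if_rtrancl:
  assumes "(a, b) \<in> (adj_rel ends F)\<^sup>*"
  obtains vs es where "simple_path ends F vs es" "hd vs = a" "last vs = b"
  using assms
proof (induction arbitrary: thesis rule: rtrancl_induct)
  case base
  show ?case by (rule base[of "[a]" "[]"]) (simp_all add: simple_path_def walk_def)
next
  case (step v w)
  obtain vs es where p: "simple_path ends F vs es" "hd vs = a" "last vs = v" using step.IH by blast
  from step.hyps(2) obtain e where e: "e \<in> F" "joins ends e v w" by (auto simp: adj_rel_def)
  have len: "length vs = Suc (length es)" and d: "distinct vs" and sub: "set es \<subseteq> F"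
    and j: "\<And>i. i < length es \<Longrightarrow> joins ends (es ! i) (vs ! i) (vs ! Suc i)"
    using p(1) unfolding simple_path_def walk_def by auto
  show ?case
  proof (cases "w \<in> set vs")
    case True
    then obtain k where k: "k < length vs" "vs ! k = w" by (auto simp: in_set_conv_nth)
    show ?thesis
    proof (rule step.prems)
      show "simple_path ends F (take (Suc k) vs) (take k es)"
        unfolding simple_path_def walk_def using len d sub j k
        by (auto simp: min_def dest: in_set_takeD)
      show "hd (take (Suc k) vs) = a" using p(2) len by (cases vs) auto
      show "last (take (Suc k) vs) = w" using k by (simp add: take_Suc_conv_app_nth[OF k(1)])
    qed
  next
    case False
    have "vs \<noteq> []" using len by auto
    show ?thesis
    proof (rule step.prems)
      show "simple_path ends F (vs @ [w]) (es @ [e])"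
        by (rule simple_path_snoc[OF p(1) e(1) _ False]) (use e(2) p(3) in simp)
      show "hd (vs @ [w]) = a" using p(2) \<open>vs \<noteq> []\<close> by simp
    qed simp
  qed
qed

lemma reachable_ends_iff:
  assumes "x \<in> F"
  shows "(r, fst (ends x)) \<in> (adj_rel ends F)\<^sup>* \<longleftrightarrow> (r, snd (ends x)) \<in> (adj_rel ends F)\<^sup>*"
proof -
  have "(fst (ends x), snd (ends x)) \<in> adj_rel ends F" "(snd (ends x), fst (ends x)) \<in> adj_rel ends F"
    using assms unfolding adj_rel_def joins_def by auto
  thus ?thesis by (blast intro: rtrancl_into_rtrancl)
qed

lemma connected_on_if_reachable:
  assumes reach: "\<And>a. a \<in> V \<Longrightarrow> (r, a) \<in> (adj_rel ends F)\<^sup>*"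
  shows "connected_on V ends F"
proof -
  have sym: "sym ((adj_rel ends F)\<^sup>*)"
    by (rule sym_rtrancl) (auto simp: sym_def adj_rel_def joins_def)
  have "(a, b) \<in> (adj_rel ends F)\<^sup>*" if "a \<in> V" "b \<in> V" for a b
    using symD[OF sym reach[OF that(1)]] reach[OF that(2)] by (rule rtrancl_trans)
  thus ?thesis unfolding connected_on_def by blast
qed

lemma has_cycle_if_edge_closes_path:
  assumes p: "simple_path ends F vs es" and k: "k < length vs" "0 < k"
    and e: "e \<in> F" "e \<notin> set es" and j: "joins ends e (vs ! k) (hd vs)"
  shows "has_cycle ends F"
proof -
  have len: "length vs = Suc (length es)" and d: "distinct vs" and sub: "set es \<subseteq> F"
    and jj: "\<And>i. i < length es \<Longrightarrow> joins ends (es ! i) (vs ! i) (vs ! Suc i)"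
    using p unfolding simple_path_def walk_def by auto
  have de: "distinct es" by (rule simple_path_distinct_edges[OF p])
  let ?cv = "take (Suc k) vs @ [hd vs]" and ?ce = "take k es @ [e]"
  have "?ce \<noteq> [] \<and> distinct ?ce \<and> set ?ce \<subseteq> F \<and> length ?cv = Suc (length ?ce) \<and>
      hd ?cv = last ?cv \<and> distinct (butlast ?cv) \<and>
      (\<forall>i<length ?ce. joins ends (?ce ! i) (?cv ! i) (?cv ! Suc i))"
  proof (intro conjI allI impI)
    show "distinct ?ce" using de e(2) by (auto dest: in_set_takeD)
    show "set ?ce \<subseteq> F" using sub e(1) by (auto dest: in_set_takeD)
    show "length ?cv = Suc (length ?ce)" using len k by (simp add: min_def)
    show "hd ?cv = last ?cv" using len by (cases vs) auto
    fix i assume "i < length ?ce"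
    hence "i < k \<or> i = k" using len k by (auto simp: min_def split: if_splits)
    thus "joins ends (?ce ! i) (?cv ! i) (?cv ! Suc i)"
      using jj[of i] j len k by (auto simp: nth_append min_def)
  qed (use d in simp_all)
  thus ?thesis unfolding has_cycle_def by blast
qed

lemma longest_simple_path_exists:
  assumes finV: "finite V" and FV: "\<forall>e\<in>F. fst (ends e) \<in> V \<and> snd (ends e) \<in> V"
    and p0: "simple_path ends F vs0 es0" "es0 \<noteq> []"
  obtains vs es where "simple_path ends F vs es" "es \<noteq> []"
    "\<And>vs' es'. simple_path ends F vs' es' \<Longrightarrow> length es' \<le> length es"
proof -
  let ?P = "\<lambda>p. simple_path ends F (fst p) (snd p) \<and> snd p \<noteq> []"
  have bound: "\<forall>p. ?P p \<longrightarrow> length (snd p) < card V"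
  proof (intro allI impI)
    fix p assume Pp: "?P p"
    have "set (fst p) \<subseteq> V"
      using walk_vertices_subset[of ends F "fst p" "snd p" V] Pp FV unfolding simple_path_def by auto
    hence "card (set (fst p)) \<le> card V" using finV by (rule card_mono[rotated])
    thus "length (snd p) < card V"
      using Pp unfolding simple_path_def walk_def by (simp add: distinct_card)
  qed
  obtain p where pP: "?P p" and pmax: "\<forall>q. ?P q \<longrightarrow> length (snd q) \<le> length (snd p)"
    using ex_has_greatest_nat[of ?P "(vs0, es0)" "\<lambda>p. length (snd p)" "card V"] p0 bound by auto
  show ?thesis
  proof (rule that)
    show "simple_path ends F (fst p) (snd p)" "snd p \<noteq> []" using pP by auto
    show "length es' \<le> length (snd p)" if "simple_path ends F vs' es'" for vs' es'
      using pmax[rule_format, of "(vs', es')"] that by (cases es') auto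
  qed
qed

lemma longest_simple_path_start_is_leaf:
  assumes ac: "\<not> has_cycle ends F"
    and sp: "simple_path ends F (a # vs) (e1 # es)"
    and pmax: "\<And>vs' es'. simple_path ends F vs' es' \<Longrightarrow> length es' \<le> Suc (length es)"
    and e: "e \<in> F" "fst (ends e) = a \<or> snd (ends e) = a"
  shows "e = e1"
proof (rule ccontr)
  assume ne: "e \<noteq> e1"
  define w where "w = (if fst (ends e) = a then snd (ends e) else fst (ends e))"
  have jw: "joins ends e a w" using e(2) unfolding w_def joins_def by (cases "ends e") auto
  have len: "length (a # vs) = Suc (length (e1 # es))" and d: "distinct (a # vs)"
    and jj: "\<And>i. i < length (e1 # es) \<Longrightarrow> joins ends ((e1 # es) ! i) ((a # vs) ! i) ((a # vs) ! Suc i)"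
    using sp unfolding simple_path_def walk_def by (simp_all del: length_Cons)
  have notin: "e \<notin> set (e1 # es)"
  proof
    assume "e \<in> set (e1 # es)"
    then obtain i where i: "i < length (e1 # es)" "(e1 # es) ! i = e" by (metis in_set_conv_nth)
    from joins_cases[OF jw jj[OF i(1), unfolded i(2)]] have "i = 0"
      using d len i(1) nth_eq_iff_index_eq[OF d, of 0] by (auto simp del: length_Cons)
    thus False using i(2) ne by simp
  qed
  show False
  proof (cases "w \<in> set (a # vs)")
    case False
    have "simple_path ends F (w # a # vs) (e # e1 # es)"
      by (rule simple_path_Cons[OF sp]) (use jw e(1) False in \<open>auto simp: joins_commute\<close>)
    with pmax show False by fastforce
  next
    case True
    then obtain k where k: "k < length (a # vs)" "(a # vs) ! k = w" by (metis in_set_conv_nth)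
    show False
    proof (cases "k = 0")
      case True
      hence "fst (ends e) = snd (ends e)" using jw k unfolding joins_def by auto
      thus False using has_cycle_if_loop[OF e(1)] ac by blast
    next
      case False
      have "joins ends e ((a # vs) ! k) (hd (a # vs))" using jw k by (simp add: joins_commute)
      thus False using has_cycle_if_edge_closes_path[OF sp k(1) _ e(1) notin] False ac by simp
    qed
  qed
qed

lemma card_less_if_acyclic:
  assumes "finite V" "finite F" "\<forall>e\<in>F. fst (ends e) \<in> V \<and> snd (ends e) \<in> V"
    and "\<not> has_cycle ends F" "V \<noteq> {}"
  shows "card F < card V"
  using assms
proof (induction "card F" arbitrary: F V rule: less_induct)
  case less
  note finV = less.prems(1) and finF = less.prems(2) and FV = less.prems(3) and ac = less.prems(4)
  show ?case
  proof (cases "F = {}")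
    case True thus ?thesis using less.prems by (simp add: card_gt_0_iff)
  next
    case False
    then obtain e0 a b where e0: "e0 \<in> F" "ends e0 = (a, b)" by (metis all_not_in_conv surj_pair)
    have "a \<noteq> b" using has_cycle_if_loop[of e0 F ends] e0 ac by auto
    hence "simple_path ends F [a, b] [e0]"
      using e0 unfolding simple_path_def walk_def joins_def by auto
    then obtain vs es where sp: "simple_path ends F vs es" and "es \<noteq> []"
      and pmax: "\<And>vs' es'. simple_path ends F vs' es' \<Longrightarrow> length es' \<le> length es"
      using longest_simple_path_exists[OF finV FV] by blast
    then obtain a0 vs' e1 es' where vs: "vs = a0 # vs'" and es: "es = e1 # es'"
      unfolding simple_path_def walk_def by (cases vs; cases es) auto
    note t = simple_path_ConsD[OF sp[unfolded vs es]]
    have leaf: "e = e1" if "e \<in> F" "fst (ends e) = a0 \<or> snd (ends e) = a0" for e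
      by (rule longest_simple_path_start_is_leaf[OF ac sp[unfolded vs es] _ that])
         (use pmax es in auto)
    have "set vs \<subseteq> V"
      using walk_vertices_subset[OF _ \<open>es \<noteq> []\<close> FV] sp unfolding simple_path_def by auto
    hence a0V: "a0 \<in> V" and "hd vs' \<in> V - {a0}" using t(4,5) vs by auto
    moreover have "card (F - {e1}) < card F" using t(3) finF by (rule card_Diff1_less[rotated])
    moreover have "\<forall>e\<in>F - {e1}. fst (ends e) \<in> V - {a0} \<and> snd (ends e) \<in> V - {a0}"
      using FV leaf by auto
    moreover have "\<not> has_cycle ends (F - {e1})" using ac has_cycle_mono[of ends "F - {e1}" F] by blast
    ultimately have "card (F - {e1}) < card (V - {a0})"
      using less.hyps finV finF by (metis Diff_empty Diff_eq_empty_iff empty_iff finite_Diff)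
    thus ?thesis using t(3) a0V finF finV by (simp add: card_Diff_singleton)
  qed
qed

lemma sum_incidence:
  assumes "finite V" "fst (ends x) \<in> V" "snd (ends x) \<in> V"
  shows "(\<Sum>v\<in>V. g v * incidence ends v x) = g (snd (ends x)) - g (fst (ends x))"
  using assms
  by (simp add: incidence_def right_diff_distrib sum_subtractf if_distrib[of "(*) _"] sum.delta
      cong: if_cong)

lemma boundary_chains_if_connected:
  assumes finF: "finite F" and con: "connected_on V ends F" and r: "r \<in> V"
  obtains C where "\<And>w u. w \<in> V \<Longrightarrow>
    (\<Sum>x\<in>F. incidence ends u x * C w x) = (if u = w then 1 else 0) - (if u = r then 1 else 0)"
proof -
  have "\<forall>w\<in>V. \<exists>p. simple_path ends F (fst p) (snd p) \<and> hd (fst p) = r \<and> last (fst p) = w"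
    using con r simple_path_if_rtrancl unfolding connected_on_def by (metis fst_conv snd_conv)
  then obtain P where P: "\<And>w. w \<in> V \<Longrightarrow>
      simple_path ends F (fst (P w)) (snd (P w)) \<and> hd (fst (P w)) = r \<and> last (fst (P w)) = w"
    by metis
  show thesis
  proof (rule that[of "\<lambda>w. walk_chain ends (fst (P w)) (snd (P w))"])
    fix w u assume "w \<in> V"
    thus "(\<Sum>x\<in>F. incidence ends u x * walk_chain ends (fst (P w)) (snd (P w)) x)
        = (if u = w then 1 else 0) - (if u = r then 1 else 0)"
      using boundary_walk_chain[OF _ finF, of ends "fst (P w)" "snd (P w)" u] P[of w]
      unfolding simple_path_def by auto
  qed
qed

text \<open>Boundaries of chains from a root to the other vertices give a right inverse of the
  reduced incidence matrix of a connected edge set, which therefore has at least as many columns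
  as rows.\<close>

lemma card_le_if_connected:
  assumes finV: "finite V" and finF: "finite F" and con: "connected_on V ends F" and r: "r \<in> V"
  shows "card V \<le> Suc (card F)"
proof (rule ccontr)
  assume "\<not> card V \<le> Suc (card F)"
  hence lt: "card F < card (V - {r})" using r finV by (simp add: card_Diff_singleton)
  let ?W = "V - {r}"
  obtain C where C: "\<And>w u. w \<in> V \<Longrightarrow>
      (\<Sum>x\<in>F. incidence ends u x * C w x) = (if u = w then 1 else 0) - (if u = r then 1 else 0)"
    using boundary_chains_if_connected[OF finF con r] by blast
  have no_inj: "{g. g \<in> ?W \<rightarrow>\<^sub>E F \<and> inj_on g ?W} = {}"
    using card_inj_on_le[of _ ?W F] finF lt by (auto simp: PiE_def Pi_def)
  have "det_on (\<lambda>u w. \<Sum>x\<in>F. incidence ends u x * C w x) ?W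
      = det_on (\<lambda>u w. if u = w then 1 else 0) ?W"
    by (rule det_on_cong) (simp add: C)
  also have "\<dots> = 1" by (rule det_on_identity) (use finV in simp)
  finally have "det_on (\<lambda>u w. \<Sum>x\<in>F. incidence ends u x * C w x) ?W = 1" .
  moreover have "det_on (\<lambda>u w. \<Sum>x\<in>F. incidence ends u x * C w x) ?W
      = (\<Sum>g | g \<in> ?W \<rightarrow>\<^sub>E F \<and> inj_on g ?W.
          (\<Prod>u\<in>?W. incidence ends u (g u)) * det_on (\<lambda>u w. C w (g u)) ?W)"
    by (rule det_on_mult_expand_inj) (use finV finF in simp_all)
  ultimately show False unfolding no_inj by simp
qed

lemma spanning_tree_card:
  assumes finV: "finite V" and Vne: "V \<noteq> {}" and finE: "finite E"
    and EV: "\<forall>e\<in>E. fst (ends e) \<in> V \<and> snd (ends e) \<in> V"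
    and T: "spanning_tree V E ends T"
  shows "Suc (card T) = card V"
proof -
  have TE: "T \<subseteq> E" and con: "connected_on V ends T" and ac: "\<not> has_cycle ends T"
    using T unfolding spanning_tree_def by auto
  have finT: "finite T" using TE finE by (rule finite_subset)
  have "card T < card V" by (rule card_less_if_acyclic[OF finV finT _ ac Vne]) (use EV TE in auto)
  moreover obtain r where "r \<in> V" using Vne by blast
  hence "card V \<le> Suc (card T)" by (rule card_le_if_connected[OF finV finT con])
  ultimately show ?thesis by simp
qed

text \<open>The bijection rho indexes the rows of the reduced incidence matrix (the vertices other than
  the root) by tree edges, so that this matrix becomes square; any bijection will do.\<close>

locale rooted_spanning_tree =
  fixes V :: "'v set" and E :: "'e set" and ends :: "'e \<Rightarrow> 'v \<times> 'v"
    and T0 :: "'e set" and r :: 'v and rho :: "'e \<Rightarrow> 'v"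
  assumes finite_V: "finite V" and finite_E: "finite E"
    and ends_in_V: "\<forall>e\<in>E. fst (ends e) \<in> V \<and> snd (ends e) \<in> V"
    and spanning_tree_T0: "spanning_tree V E ends T0"
    and root: "r \<in> V"
    and rho: "bij_betw rho T0 (V - {r})"
begin

lemma T0_subset: "T0 \<subseteq> E"
  using spanning_tree_T0 unfolding spanning_tree_def by auto

lemma finite_T0: "finite T0"
  using T0_subset finite_E by (rule finite_subset)

lemma connected_T0: "connected_on V ends T0"
  using spanning_tree_T0 unfolding spanning_tree_def by auto

definition reduced_incidence :: "('e \<Rightarrow> 'e) \<Rightarrow> 'e \<Rightarrow> 'e \<Rightarrow> int" where
  "reduced_incidence \<phi> f f' = incidence ends (rho f) (\<phi> f')"

lemma sum_reduced_incidence: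
  assumes "bij_betw \<phi> T0 F"
  shows "(\<Sum>f'\<in>T0. reduced_incidence \<phi> f f' * c (\<phi> f')) = (\<Sum>x\<in>F. incidence ends (rho f) x * c x)"
  using sum.reindex_bij_betw[OF assms, of "\<lambda>x. incidence ends (rho f) x * c x"]
  by (simp add: reduced_incidence_def)

lemma det_reduced_incidence_connected:
  assumes \<phi>: "bij_betw \<phi> T0 F" and con: "connected_on V ends F"
  shows "det_on (reduced_incidence \<phi>) T0 * det_on (reduced_incidence \<phi>) T0 = 1"
proof -
  have finF: "finite F" using \<phi> finite_T0 bij_betw_finite by blast
  obtain C where C: "\<And>w u. w \<in> V \<Longrightarrow>
      (\<Sum>x\<in>F. incidence ends u x * C w x) = (if u = w then 1 else 0) - (if u = r then 1 else 0)"
    using boundary_chains_if_connected[OF finF con root] by blast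
  have "det_on (\<lambda>f1 f2. \<Sum>f'\<in>T0. reduced_incidence \<phi> f1 f' * C (rho f2) (\<phi> f')) T0
      = det_on (\<lambda>f1 f2. if f1 = f2 then 1 else 0) T0"
  proof (rule det_on_cong)
    fix f1 f2 assume f: "f1 \<in> T0" "f2 \<in> T0"
    hence "rho f1 \<in> V - {r}" "rho f2 \<in> V - {r}" "rho f1 = rho f2 \<longleftrightarrow> f1 = f2"
      using rho by (auto simp: bij_betw_def inj_on_def)
    thus "(\<Sum>f'\<in>T0. reduced_incidence \<phi> f1 f' * C (rho f2) (\<phi> f')) = (if f1 = f2 then 1 else 0)"
      by (simp add: sum_reduced_incidence[OF \<phi>] C)
  qed
  also have "\<dots> = 1" by (rule det_on_identity[OF finite_T0])
  finally have "det_on (reduced_incidence \<phi>) T0 * det_on (\<lambda>f' f2. C (rho f2) (\<phi> f')) T0 = 1"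
    by (simp add: det_on_mult[OF finite_T0])
  hence "det_on (reduced_incidence \<phi>) T0 \<in> {1, -1}" by (auto simp: zmult_eq_1_iff)
  thus ?thesis by auto
qed

lemma det_reduced_incidence_cycle:
  assumes \<phi>: "bij_betw \<phi> T0 F" and cyc: "has_cycle ends F"
  shows "det_on (reduced_incidence \<phi>) T0 = 0"
proof -
  have finF: "finite F" using \<phi> finite_T0 bij_betw_finite by blast
  from cyc obtain vs es where ne: "es \<noteq> []" and d: "distinct es" and sub: "set es \<subseteq> F"
    and len: "length vs = Suc (length es)" and closed: "hd vs = last vs"
    and j: "\<forall>i<length es. joins ends (es ! i) (vs ! i) (vs ! Suc i)"
    unfolding has_cycle_def by blast
  have w: "walk ends F vs es" unfolding walk_def using len sub j by auto
  have e0F: "es ! 0 \<in> F" using sub ne by (auto simp: hd_conv_nth[symmetric])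
  let ?f0 = "inv_into T0 \<phi> (es ! 0)"
  have f0: "?f0 \<in> T0" "\<phi> ?f0 = es ! 0"
    using e0F \<phi> by (auto simp: bij_betw_def inv_into_into f_inv_into_f)
  show ?thesis
  proof (rule det_on_dependent_columns[OF finite_T0 f0(1)])
    show "walk_chain ends vs es (\<phi> ?f0) \<noteq> 0" using walk_chain_nth[OF d, of 0 ends vs] ne f0(2) by auto
    fix f assume "f \<in> T0"
    show "(\<Sum>f'\<in>T0. reduced_incidence \<phi> f f' * walk_chain ends vs es (\<phi> f')) = 0"
      using sum_reduced_incidence[OF \<phi>] boundary_walk_chain[OF w finF, of "rho f"] closed by simp
  qed
qed

lemma det_reduced_incidence_disconnected:
  assumes \<phi>: "bij_betw \<phi> T0 F" and FE: "F \<subseteq> E" and nc: "\<not> connected_on V ends F"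
  shows "det_on (reduced_incidence \<phi>) T0 = 0"
proof -
  define K where "K = {v. (r, v) \<in> (adj_rel ends F)\<^sup>*}"
  have rK: "r \<in> K" unfolding K_def by simp
  have closed: "fst (ends x) \<in> K \<longleftrightarrow> snd (ends x) \<in> K" if "x \<in> F" for x
    using reachable_ends_iff[OF that] unfolding K_def by simp
  obtain u where u: "u \<in> V" "u \<notin> K"
    using nc connected_on_if_reachable[of V r ends F] unfolding K_def by blast
  let ?f0 = "inv_into T0 rho u"
  have f0: "?f0 \<in> T0" "rho ?f0 = u"
    using u rK bij_betw_inv_into_right[OF rho] bij_betw_apply[OF bij_betw_inv_into[OF rho]] by auto
  let ?c = "\<lambda>f. if rho f \<in> K then 0 else (1::int)"
  show ?thesis
  proof (rule det_on_dependent_rows[OF finite_T0 f0(1)])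
    show "?c ?f0 \<noteq> 0" using f0 u by simp
    fix f' assume "f' \<in> T0"
    hence xF: "\<phi> f' \<in> F" using \<phi> by (auto simp: bij_betw_def)
    hence ends_V: "fst (ends (\<phi> f')) \<in> V" "snd (ends (\<phi> f')) \<in> V" using ends_in_V FE by auto
    have "(\<Sum>f\<in>T0. ?c f * reduced_incidence \<phi> f f')
        = (\<Sum>v\<in>V - {r}. (if v \<in> K then 0 else 1) * incidence ends v (\<phi> f'))"
      using sum.reindex_bij_betw[OF rho, of "\<lambda>v. (if v \<in> K then 0 else 1) * incidence ends v (\<phi> f')"]
      by (simp add: reduced_incidence_def)
    also have "\<dots> = (\<Sum>v\<in>V. (if v \<in> K then 0 else 1) * incidence ends v (\<phi> f'))"
      by (rule sum.mono_neutral_left) (use finite_V rK in auto)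
    also have "\<dots> = 0"
      using sum_incidence[of V ends "\<phi> f'" "\<lambda>v. if v \<in> K then 0 else 1"] finite_V ends_V closed[OF xF]
      by simp
    finally show "(\<Sum>f\<in>T0. ?c f * reduced_incidence \<phi> f f') = 0" .
  qed
qed

theorem det_reduced_incidence_squared:
  assumes \<phi>: "bij_betw \<phi> T0 F" and FE: "F \<subseteq> E"
  shows "det_on (reduced_incidence \<phi>) T0 * det_on (reduced_incidence \<phi>) T0
       = (if spanning_tree V E ends F then 1 else 0)"
proof (cases "spanning_tree V E ends F")
  case True
  thus ?thesis using det_reduced_incidence_connected[OF \<phi>] unfolding spanning_tree_def by auto
next
  case False
  hence "\<not> connected_on V ends F \<or> has_cycle ends F" using FE unfolding spanning_tree_def by auto
  thus ?thesis
    using det_reduced_incidence_cycle[OF \<phi>] det_reduced_incidence_disconnected[OF \<phi> FE] False by auto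
qed

lemma det_reduced_incidence_T0_squared:
  "det_on (reduced_incidence id) T0 * det_on (reduced_incidence id) T0 = 1"
  by (rule det_reduced_incidence_connected[OF _ connected_T0]) simp

text \<open>Two paths in T0 with the same ends have the same chain, since the difference of the chains
  lies in the kernel of the invertible reduced incidence matrix; their edge sets are then equal.\<close>

lemma simple_paths_in_T0_unique:
  assumes p1: "simple_path ends T0 vs1 es1" and p2: "simple_path ends T0 vs2 es2"
    and "hd vs1 = hd vs2" and "last vs1 = last vs2"
  shows "vs1 = vs2 \<and> es1 = es2"
proof -
  let ?c1 = "walk_chain ends vs1 es1" and ?c2 = "walk_chain ends vs2 es2"
  have w1: "walk ends T0 vs1 es1" and w2: "walk ends T0 vs2 es2"
    using p1 p2 unfolding simple_path_def by auto
  have eq: "?c1 x = ?c2 x" if x: "x \<in> T0" for x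
  proof (rule ccontr)
    assume "?c1 x \<noteq> ?c2 x"
    hence "det_on (reduced_incidence id) T0 = 0"
    proof (intro det_on_dependent_columns[OF finite_T0 x, of "\<lambda>y. ?c1 y - ?c2 y"])
      fix f assume "f \<in> T0"
      show "(\<Sum>f'\<in>T0. reduced_incidence id f f' * (?c1 f' - ?c2 f')) = 0"
        using sum_reduced_incidence[OF bij_betw_id, of f ?c1] sum_reduced_incidence[OF bij_betw_id, of f ?c2]
          boundary_walk_chain[OF w1 finite_T0, of "rho f"] boundary_walk_chain[OF w2 finite_T0, of "rho f"]
          assms(3,4)
        by (simp add: right_diff_distrib sum_subtractf)
    qed simp
    thus False using det_reduced_incidence_T0_squared by simp
  qed
  have "set es1 = set es2"
  proof (rule Set.set_eqI)
    fix x show "x \<in> set es1 \<longleftrightarrow> x \<in> set es2"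
      using walk_chain_eq_0_iff[OF simple_path_distinct_edges[OF p1], of ends vs1 x]
        walk_chain_eq_0_iff[OF simple_path_distinct_edges[OF p2], of ends vs2 x] eq[of x]
        w1 w2 unfolding walk_def by (cases "x \<in> T0") auto
  qed
  thus ?thesis using simple_path_unique_by_edges[OF p1 p2 assms(3)] by simp
qed

lemma tree_path_simple_path:
  assumes "a \<in> V" "b \<in> V"
  shows "simple_path ends T0 (fst (tree_path ends T0 a b)) (snd (tree_path ends T0 a b))
       \<and> hd (fst (tree_path ends T0 a b)) = a \<and> last (fst (tree_path ends T0 a b)) = b"
proof -
  have "(a, b) \<in> (adj_rel ends T0)\<^sup>*" using connected_T0 assms unfolding connected_on_def by auto
  then obtain vs es where p: "simple_path ends T0 vs es" "hd vs = a" "last vs = b"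
    by (rule simple_path_if_rtrancl)
  have "\<exists>!p. is_path ends T0 (fst p) (snd p) a b"
  proof (rule ex1I[of _ "(vs, es)"])
    show "is_path ends T0 (fst (vs, es)) (snd (vs, es)) a b" using p by (simp add: is_path_iff_simple_path)
    fix q assume "is_path ends T0 (fst q) (snd q) a b"
    thus "q = (vs, es)"
      using simple_paths_in_T0_unique[OF _ p(1)] p(2,3) by (auto simp: is_path_iff_simple_path prod_eq_iff)
  qed
  hence "is_path ends T0 (fst (tree_path ends T0 a b)) (snd (tree_path ends T0 a b)) a b"
    unfolding tree_path_def by (rule theI'[where P = "\<lambda>p. is_path ends T0 (fst p) (snd p) a b"])
  thus ?thesis unfolding is_path_iff_simple_path .
qed

lemma Dchain_eq_walk_chain:
  assumes "fst (ends e) \<noteq> snd (ends e)"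
  shows "Dchain ends T0 e = walk_chain ends (fst (tree_path ends T0 (snd (ends e)) (fst (ends e))))
                                          (snd (tree_path ends T0 (snd (ends e)) (fst (ends e))))"
  using assms unfolding Dchain_def walk_chain_def Let_def by auto

lemma Dchain_eq_0_outside_T0:
  assumes "e \<in> E" "x \<notin> T0"
  shows "Dchain ends T0 e x = 0"
proof (cases "fst (ends e) = snd (ends e)")
  case False
  define p where "p = tree_path ends T0 (snd (ends e)) (fst (ends e))"
  have "set (snd p) \<subseteq> T0"
    using tree_path_simple_path[of "snd (ends e)" "fst (ends e)"] ends_in_V assms(1)
    unfolding p_def simple_path_def walk_def by auto
  hence "x \<notin> set (snd p)" using assms(2) by blast
  thus ?thesis by (simp add: Dchain_eq_walk_chain[OF False] walk_chain_eq_0 flip: p_def)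
qed (simp add: Dchain_def)

lemma boundary_Dchain:
  assumes e: "e \<in> E"
  shows "(\<Sum>x\<in>T0. incidence ends v x * Dchain ends T0 e x) = - incidence ends v e"
proof (cases "fst (ends e) = snd (ends e)")
  case False
  define p where "p = tree_path ends T0 (snd (ends e)) (fst (ends e))"
  have p: "walk ends T0 (fst p) (snd p)" "hd (fst p) = snd (ends e)" "last (fst p) = fst (ends e)"
    using tree_path_simple_path[of "snd (ends e)" "fst (ends e)"] ends_in_V e
    unfolding p_def simple_path_def by auto
  have "(\<Sum>x\<in>T0. incidence ends v x * Dchain ends T0 e x)
      = (\<Sum>x\<in>T0. incidence ends v x * walk_chain ends (fst p) (snd p) x)"
    by (simp add: Dchain_eq_walk_chain[OF False] flip: p_def)
  also have "\<dots> = (if v = fst (ends e) then 1 else 0) - (if v = snd (ends e) then 1 else 0)"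
    using boundary_walk_chain[OF p(1) finite_T0] p(2,3) by simp
  finally show ?thesis by (simp add: incidence_def)
qed (simp add: Dchain_def incidence_def)

end

lemma ex_rooted_spanning_tree:
  assumes "finite V" "V \<noteq> {}" "finite E" "\<forall>e\<in>E. fst (ends e) \<in> V \<and> snd (ends e) \<in> V"
    and "spanning_tree V E ends T0"
  obtains r rho where "rooted_spanning_tree V E ends T0 r rho"
proof -
  obtain r where r: "r \<in> V" using assms(2) by blast
  have "finite T0" using assms(3,5) finite_subset unfolding spanning_tree_def by blast
  moreover have "card T0 = card (V - {r})"
    using spanning_tree_card[OF assms] r assms(1) by (simp add: card_Diff_singleton)
  ultimately obtain rho where "bij_betw rho T0 (V - {r})"
    using finite_same_card_bij[of T0 "V - {r}"] assms(1) by auto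
  hence "rooted_spanning_tree V E ends T0 r rho" using assms r by unfold_locales auto
  thus thesis by (rule that)
qed

definition mesh_red_entry :: "('e \<Rightarrow> 'v \<times> 'v) \<Rightarrow> 'e set \<Rightarrow> 'e \<Rightarrow> 'e \<Rightarrow> int" where
  "mesh_red_entry ends T0 e e' = (\<Sum>f\<in>T0. Dchain ends T0 e f * Dchain ends T0 e' f)"

lemma mesh_red_eq_mat:
  assumes fs: "distinct fs" "set fs = T0"
  shows "mesh_red ends T0 es fs
       = mat (length es) (length es) (\<lambda>(i, j). real_of_int (mesh_red_entry ends T0 (es ! i) (es ! j)))"
proof -
  let ?D = "\<lambda>e f. real_of_int (Dchain ends T0 e f)"
  have "mesh_red ends T0 es fs $$ (i, j) = real_of_int (mesh_red_entry ends T0 (es ! i) (es ! j))"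
    if "i < length es" "j < length es" for i j
  proof -
    have "mesh_red ends T0 es fs $$ (i, j) = (\<Sum>k\<in>{0..<length fs}. ?D (es ! i) (fs ! k) * ?D (es ! j) (fs ! k))"
      using that by (simp add: mesh_red_def Ymat_def scalar_prod_def)
    also have "\<dots> = (\<Sum>f\<in>T0. ?D (es ! i) f * ?D (es ! j) f)"
      by (rule sum.reindex_bij_betw[OF bij_betw_nth[OF fs(1) _ fs(2)[symmetric]]]) auto
    finally show ?thesis by (simp add: mesh_red_entry_def)
  qed
  thus ?thesis by (intro eq_matI) (simp_all add: mesh_red_def Ymat_def)
qed

context rooted_spanning_tree
begin

text \<open>Replacing the tree edges in R by the edges of C (matched by h): as \<open>\<partial>D(e) = -\<partial>e\<close>, the new
  reduced incidence matrix is that of T0 times a matrix whose only nontrivial columns are the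
  (negated) columns of D.\<close>

lemma det_reduced_incidence_exchange:
  assumes C: "C \<subseteq> E - T0" and R: "R \<subseteq> T0" and h: "bij_betw h C R"
  shows "det_on (reduced_incidence (\<lambda>f. if f \<in> R then inv_into C h f else f)) T0
       = det_on (reduced_incidence id) T0 * ((-1) ^ card R * det_on (\<lambda>i j. Dchain ends T0 i (h j)) C)"
proof -
  let ?\<phi> = "\<lambda>f. if f \<in> R then inv_into C h f else f"
  let ?Q = "\<lambda>k f. if f \<in> R then - Dchain ends T0 (inv_into C h f) k else if k = f then 1 else 0"
  have "det_on (reduced_incidence ?\<phi>) T0 = det_on (\<lambda>f f'. \<Sum>k\<in>T0. reduced_incidence id f k * ?Q k f') T0"
  proof (rule det_on_cong)
    fix f f' assume "f \<in> T0" "f' \<in> T0"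
    show "reduced_incidence ?\<phi> f f' = (\<Sum>k\<in>T0. reduced_incidence id f k * ?Q k f')"
    proof (cases "f' \<in> R")
      case True
      hence "inv_into C h f' \<in> E" using C bij_betw_apply[OF bij_betw_inv_into[OF h]] by auto
      thus ?thesis
        using True boundary_Dchain[of "inv_into C h f'" "rho f"]
        by (simp add: reduced_incidence_def sum_negf)
    next
      case False
      thus ?thesis using \<open>f' \<in> T0\<close> finite_T0
        by (simp add: reduced_incidence_def if_distrib[of "(*) _"] sum.delta' cong: if_cong)
    qed
  qed
  also have "\<dots> = det_on (reduced_incidence id) T0 * det_on ?Q T0"
    by (rule det_on_mult[OF finite_T0])
  also have "det_on ?Q T0 = (-1) ^ card R * det_on (\<lambda>i j. Dchain ends T0 i (h j)) C"
    by (rule det_on_exchange_matrix[OF finite_T0 R h])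
  finally show ?thesis .
qed

lemma det_Dchain_minor_squared:
  assumes C: "C \<subseteq> E - T0" and R: "R \<subseteq> T0" and h: "bij_betw h C R"
  shows "det_on (\<lambda>i j. Dchain ends T0 i (h j)) C * det_on (\<lambda>i j. Dchain ends T0 i (h j)) C
       = (if spanning_tree V E ends ((T0 - R) \<union> C) then 1 else 0)"
proof -
  let ?\<phi> = "\<lambda>f. if f \<in> R then inv_into C h f else f"
  let ?d = "det_on (\<lambda>i j. Dchain ends T0 i (h j)) C"
  have "bij_betw ?\<phi> (R \<union> (T0 - R)) (C \<union> (T0 - R))"
  proof (rule bij_betw_combine)
    show "bij_betw ?\<phi> R C"
      using bij_betw_inv_into[OF h] by (rule bij_betw_cong[THEN iffD1, rotated]) simp
    show "bij_betw ?\<phi> (T0 - R) (T0 - R)"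
      by (rule bij_betw_cong[THEN iffD1, rotated, of id]) auto
  qed (use C in auto)
  moreover have "R \<union> (T0 - R) = T0" "C \<union> (T0 - R) = (T0 - R) \<union> C" using R by auto
  ultimately have \<phi>: "bij_betw ?\<phi> T0 ((T0 - R) \<union> C)" by simp
  have "(T0 - R) \<union> C \<subseteq> E" using C T0_subset by auto
  hence "(if spanning_tree V E ends ((T0 - R) \<union> C) then 1 else 0)
      = det_on (reduced_incidence ?\<phi>) T0 * det_on (reduced_incidence ?\<phi>) T0"
    using det_reduced_incidence_squared[OF \<phi>] by simp
  also have "\<dots> = (det_on (reduced_incidence id) T0 * det_on (reduced_incidence id) T0)
      * ((-1) ^ card R * (-1) ^ card R) * (?d * ?d)"
    unfolding det_reduced_incidence_exchange[OF C R h] by (simp only: mult_ac)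
  also have "\<dots> = ?d * ?d"
    by (simp add: det_reduced_incidence_T0_squared flip: power_mult_distrib)
  finally show ?thesis by simp
qed

definition tree_exchanges :: "'e set \<Rightarrow> 'e set set" where
  "tree_exchanges C = {R. R \<subseteq> T0 \<and> card R = card C \<and> spanning_tree V E ends ((T0 - R) \<union> C)}"

text \<open>By Cauchy-Binet, a principal minor of \<open>Y\<^sup>t Y\<close> is a sum of squared maximal minors of Y,
  each of which is 1 or 0 according as the corresponding exchange of edges yields a spanning tree.\<close>

lemma det_mesh_red_entry_minor:
  assumes C: "C \<subseteq> E - T0"
  shows "det_on (mesh_red_entry ends T0) C = int (card (tree_exchanges C))"
proof -
  let ?D = "Dchain ends T0"
  let ?S = "{R. R \<subseteq> T0 \<and> card R = card C}"
  have finC: "finite C" using C finite_E finite_subset by blast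
  have finS: "finite ?S" using finite_T0 by (auto intro: finite_subset[of _ "Pow T0"])
  have "\<exists>h. bij_betw h C R" if "R \<in> ?S" for R
    using that finite_subset[OF _ finite_T0] by (intro finite_same_card_bij[OF finC]) auto
  then obtain h where h: "\<And>R. R \<in> ?S \<Longrightarrow> bij_betw (h R) C R" by metis
  have "det_on (mesh_red_entry ends T0) C = det_on (\<lambda>i j. \<Sum>f\<in>T0. ?D i f * ?D j f) C"
    unfolding mesh_red_entry_def ..
  also have "\<dots> = (\<Sum>R\<in>?S. det_on (\<lambda>i j. ?D i (h R j)) C * det_on (\<lambda>i j. ?D j (h R i)) C)"
    by (rule det_on_Cauchy_Binet[OF finC finite_T0]) (simp add: h)
  also have "\<dots> = (\<Sum>R\<in>?S. if spanning_tree V E ends ((T0 - R) \<union> C) then 1 else 0)"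
  proof (rule sum.cong[OF refl])
    fix R assume R: "R \<in> ?S"
    show "det_on (\<lambda>i j. ?D i (h R j)) C * det_on (\<lambda>i j. ?D j (h R i)) C
        = (if spanning_tree V E ends ((T0 - R) \<union> C) then 1 else 0)"
      using det_Dchain_minor_squared[OF C _ h[OF R]] det_on_transpose[OF finC, of "\<lambda>i j. ?D i (h R j)"] R
      by simp
  qed
  also have "\<dots> = int (card (tree_exchanges C))"
  proof -
    have "tree_exchanges C = ?S \<inter> {R. spanning_tree V E ends ((T0 - R) \<union> C)}"
      unfolding tree_exchanges_def by auto
    thus ?thesis using finS by (simp add: sum.If_cases)
  qed
  finally show ?thesis .
qed

lemma card_spanning_tree: "spanning_tree V E ends T \<Longrightarrow> card T = card T0"
  using spanning_tree_card[OF finite_V _ finite_E ends_in_V] spanning_tree_T0 root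
  by (metis Suc_inject empty_iff)

lemma bij_betw_tree_exchanges:
  "bij_betw (\<lambda>(C, R). (T0 - R) \<union> C)
     (SIGMA C:{C. C \<subseteq> E - T0 \<and> card C = j}. tree_exchanges C)
     {T. spanning_tree V E ends T \<and> card (T \<inter> (E - T0)) = j}"
proof (rule bij_betw_byWitness[where f'="\<lambda>T. (T \<inter> (E - T0), T0 - T)"])
  show "\<forall>p\<in>(SIGMA C:{C. C \<subseteq> E - T0 \<and> card C = j}. tree_exchanges C).
      (\<lambda>T. (T \<inter> (E - T0), T0 - T)) ((\<lambda>(C, R). (T0 - R) \<union> C) p) = p"
    by (auto simp: tree_exchanges_def)
  show "\<forall>T\<in>{T. spanning_tree V E ends T \<and> card (T \<inter> (E - T0)) = j}.
      (\<lambda>(C, R). (T0 - R) \<union> C) ((\<lambda>T. (T \<inter> (E - T0), T0 - T)) T) = T"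
    using T0_subset unfolding spanning_tree_def by auto
  show "(\<lambda>(C, R). (T0 - R) \<union> C) ` (SIGMA C:{C. C \<subseteq> E - T0 \<and> card C = j}. tree_exchanges C)
      \<subseteq> {T. spanning_tree V E ends T \<and> card (T \<inter> (E - T0)) = j}"
  proof
    fix T assume "T \<in> (\<lambda>(C, R). (T0 - R) \<union> C) ` (SIGMA C:{C. C \<subseteq> E - T0 \<and> card C = j}. tree_exchanges C)"
    then obtain C R where C: "C \<subseteq> E - T0" "card C = j" and "R \<in> tree_exchanges C"
      and T: "T = (T0 - R) \<union> C" by auto
    moreover have "((T0 - R) \<union> C) \<inter> (E - T0) = C" using C by auto
    ultimately show "T \<in> {T. spanning_tree V E ends T \<and> card (T \<inter> (E - T0)) = j}"
      by (simp add: tree_exchanges_def)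
  qed
  show "(\<lambda>T. (T \<inter> (E - T0), T0 - T)) ` {T. spanning_tree V E ends T \<and> card (T \<inter> (E - T0)) = j}
      \<subseteq> (SIGMA C:{C. C \<subseteq> E - T0 \<and> card C = j}. tree_exchanges C)"
  proof
    fix p assume "p \<in> (\<lambda>T. (T \<inter> (E - T0), T0 - T)) ` {T. spanning_tree V E ends T \<and> card (T \<inter> (E - T0)) = j}"
    then obtain T where T: "spanning_tree V E ends T" and j: "card (T \<inter> (E - T0)) = j"
      and p: "p = (T \<inter> (E - T0), T0 - T)" by auto
    have TE: "T \<subseteq> E" using T unfolding spanning_tree_def by auto
    have finT: "finite T" using TE finite_E by (rule finite_subset)
    have "card T = card (T \<inter> T0) + card (T \<inter> (E - T0))"
      using finT TE by (subst card_Un_disjoint[symmetric]) (auto intro: arg_cong[where f = card])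
    hence "card (T0 - T) = card (T \<inter> (E - T0))"
      using card_spanning_tree[OF T] finite_T0 by (simp add: card_Diff_subset_Int Int_commute)
    moreover have "(T0 - (T0 - T)) \<union> (T \<inter> (E - T0)) = T" using TE by auto
    ultimately show "p \<in> (SIGMA C:{C. C \<subseteq> E - T0 \<and> card C = j}. tree_exchanges C)"
      using T j p by (simp add: tree_exchanges_def)
  qed
qed

lemma sum_card_tree_exchanges:
  "(\<Sum>C | C \<subseteq> E - T0 \<and> card C = j. card (tree_exchanges C)) = ST V E ends T0 j"
proof -
  have "(\<Sum>C | C \<subseteq> E - T0 \<and> card C = j. card (tree_exchanges C))
      = card (SIGMA C:{C. C \<subseteq> E - T0 \<and> card C = j}. tree_exchanges C)"
    using finite_E finite_T0
    by (intro card_SigmaI[symmetric]) (auto simp: tree_exchanges_def intro: finite_subset[of _ "Pow _"])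
  also have "\<dots> = ST V E ends T0 j"
    unfolding ST_def by (rule bij_betw_same_card[OF bij_betw_tree_exchanges])
  finally show ?thesis .
qed

lemma sum_subsets_tree_exchanges:
  "(\<Sum>C\<in>Pow (E - T0). w (card C) * real (card (tree_exchanges C)))
     = (\<Sum>j=0..card (E - T0). w j * real (ST V E ends T0 j))"
proof -
  have "(\<Sum>C\<in>Pow (E - T0). w (card C) * real (card (tree_exchanges C)))
      = (\<Sum>j=0..card (E - T0). \<Sum>C\<in>{C \<in> Pow (E - T0). card C = j}. w (card C) * real (card (tree_exchanges C)))"
    by (rule sum.group[symmetric]) (use finite_E in \<open>auto simp: card_mono\<close>)
  also have "\<dots> = (\<Sum>j=0..card (E - T0). w j * real (\<Sum>C | C \<subseteq> E - T0 \<and> card C = j. card (tree_exchanges C)))"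
    by (simp add: of_nat_sum sum_distrib_left)
  also have "\<dots> = (\<Sum>j=0..card (E - T0). w j * real (ST V E ends T0 j))"
    by (simp only: sum_card_tree_exchanges)
  finally show ?thesis .
qed

lemma ST_0: "ST V E ends T0 0 = 1"
proof -
  have "{T. spanning_tree V E ends T \<and> card (T \<inter> (E - T0)) = 0} = {T0}"
  proof (intro equalityI subsetI)
    fix T assume "T \<in> {T. spanning_tree V E ends T \<and> card (T \<inter> (E - T0)) = 0}"
    hence T: "spanning_tree V E ends T" and "card (T \<inter> (E - T0)) = 0" by auto
    hence "T \<subseteq> T0" using finite_E unfolding spanning_tree_def by auto
    thus "T \<in> {T0}" using card_spanning_tree[OF T] finite_T0 by (simp add: card_subset_eq)
  qed (use spanning_tree_T0 in auto)
  thus ?thesis unfolding ST_def by simp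
qed

text \<open>Expanding the determinant along the diagonal gives the principal minors of \<open>Y\<^sup>t Y\<close>, which
  count tree exchanges.\<close>

lemma det_on_diagonal_plus_mesh_red:
  "det_on (\<lambda>e e'. (if e = e' then c else 0) + s * real_of_int (mesh_red_entry ends T0 e e')) (E - T0)
     = (\<Sum>j=0..card (E - T0). s ^ j * c ^ (card (E - T0) - j) * real (ST V E ends T0 j))"
proof -
  let ?n = "card (E - T0)"
  have "det_on (\<lambda>e e'. (if e = e' then c else 0) + s * real_of_int (mesh_red_entry ends T0 e e')) (E - T0)
      = (\<Sum>C\<in>Pow (E - T0). c ^ (?n - card C) * det_on (\<lambda>e e'. s * real_of_int (mesh_red_entry ends T0 e e')) C)"
    using finite_E by (simp add: det_on_diagonal_plus card_Diff_subset finite_subset)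
  also have "\<dots> = (\<Sum>C\<in>Pow (E - T0). (s ^ card C * c ^ (?n - card C)) * real (card (tree_exchanges C)))"
  proof (rule sum.cong[OF refl])
    fix C assume "C \<in> Pow (E - T0)"
    hence "det_on (mesh_red_entry ends T0) C = int (card (tree_exchanges C))"
      by (simp add: det_mesh_red_entry_minor)
    moreover have "det_on (\<lambda>e e'. s * real_of_int (mesh_red_entry ends T0 e e')) C
        = s ^ card C * real_of_int (det_on (mesh_red_entry ends T0) C)"
      by (simp add: det_on_def sum_distrib_left prod.distrib mult_ac flip: det_on_of_int)
    ultimately show "c ^ (?n - card C) * det_on (\<lambda>e e'. s * real_of_int (mesh_red_entry ends T0 e e')) C
        = (s ^ card C * c ^ (?n - card C)) * real (card (tree_exchanges C))" by simp
  qed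
  also have "\<dots> = (\<Sum>j=0..?n. s ^ j * c ^ (?n - j) * real (ST V E ends T0 j))"
    by (rule sum_subsets_tree_exchanges)
  finally show ?thesis .
qed

lemma Zcycle_inner:
  assumes e: "e \<in> E - T0" and e': "e' \<in> E - T0"
  shows "(\<Sum>x\<in>E. Zcycle ends T0 e x * Zcycle ends T0 e' x)
       = (if e = e' then 1 else 0) + mesh_red_entry ends T0 e e'"
proof -
  have "(\<Sum>x\<in>E. Zcycle ends T0 e x * Zcycle ends T0 e' x)
      = (\<Sum>x\<in>T0. Zcycle ends T0 e x * Zcycle ends T0 e' x)
        + (\<Sum>x\<in>E - T0. Zcycle ends T0 e x * Zcycle ends T0 e' x)"
    using sum.subset_diff[OF T0_subset finite_E] by (simp add: add.commute)
  also have "(\<Sum>x\<in>T0. Zcycle ends T0 e x * Zcycle ends T0 e' x) = mesh_red_entry ends T0 e e'"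
    unfolding mesh_red_entry_def Zcycle_def using e e' by (intro sum.cong) auto
  also have "(\<Sum>x\<in>E - T0. Zcycle ends T0 e x * Zcycle ends T0 e' x)
      = (\<Sum>x\<in>E - T0. if x = e then (if e = e' then 1 else 0) else 0)"
    unfolding Zcycle_def using e e' Dchain_eq_0_outside_T0 by (intro sum.cong) auto
  also have "\<dots> = (if e = e' then 1 else 0)" using e finite_E by simp
  finally show ?thesis by simp
qed

lemma sum_ST_eq_card_spanning_trees:
  "(\<Sum>j=0..card (E - T0). ST V E ends T0 j) = card {T. spanning_tree V E ends T}"
proof -
  let ?T = "{T. spanning_tree V E ends T}"
  have "finite ?T" using finite_E unfolding spanning_tree_def by (auto intro: finite_subset[of _ "Pow E"])
  moreover have "(\<lambda>T. card (T \<inter> (E - T0))) ` ?T \<subseteq> {0..card (E - T0)}"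
    using finite_E by (auto intro!: card_mono)
  ultimately have "(\<Sum>j=0..card (E - T0). \<Sum>T\<in>{T \<in> ?T. card (T \<inter> (E - T0)) = j}. 1) = (\<Sum>T\<in>?T. 1::nat)"
    by (intro sum.group) auto
  thus ?thesis unfolding ST_def by simp
qed

lemma mesh_eq_mat:
  assumes "set es = E - T0"
  shows "mesh E ends T0 es = mat (length es) (length es)
    (\<lambda>(i, j). (if es ! i = es ! j then 1 else 0) + real_of_int (mesh_red_entry ends T0 (es ! i) (es ! j)))"
proof -
  have "es ! i \<in> E - T0" if "i < length es" for i
    using nth_mem[OF that] unfolding assms .
  thus ?thesis
    unfolding mesh_def by (intro eq_matI) (simp_all add: Zcycle_inner del: of_int_sum of_int_mult)
qed

lemma char_mesh_eq_char_mesh_red: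
  assumes es: "distinct es" "set es = E - T0" and fs: "distinct fs" "set fs = T0"
  shows "(U + 1) \<cdot>\<^sub>m 1\<^sub>m (length es) - mesh E ends T0 es = U \<cdot>\<^sub>m 1\<^sub>m (length es) - mesh_red ends T0 es fs"
  using es(1)
  by (auto intro!: eq_matI simp: mesh_eq_mat[OF es(2)] mesh_red_eq_mat[OF fs] nth_eq_iff_index_eq)

lemma det_char_mesh_red:
  assumes es: "distinct es" "set es = E - T0" and fs: "distinct fs" "set fs = T0"
  shows "det (U \<cdot>\<^sub>m 1\<^sub>m (length es) - mesh_red ends T0 es fs)
       = U ^ length es + (\<Sum>j=1..length es. (-1) ^ j * real (ST V E ends T0 j) * U ^ (length es - j))"
proof -
  let ?A = "\<lambda>e e'. (if e = e' then U else 0) + (-1) * real_of_int (mesh_red_entry ends T0 e e')"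
  have "U \<cdot>\<^sub>m 1\<^sub>m (length es) - mesh_red ends T0 es fs
      = mat (length es) (length es) (\<lambda>(i, j). ?A (es ! i) (es ! j))"
    using es(1) by (auto intro!: eq_matI simp: mesh_red_eq_mat[OF fs] nth_eq_iff_index_eq)
  hence "det (U \<cdot>\<^sub>m 1\<^sub>m (length es) - mesh_red ends T0 es fs) = det_on ?A (E - T0)"
    unfolding es(2)[symmetric] by (rule ssubst) (rule det_mat_nth_eq_det_on[OF es(1)])
  moreover have "card (E - T0) = length es" using distinct_card[OF es(1)] es(2) by simp
  ultimately show ?thesis
    using det_on_diagonal_plus_mesh_red[of U "-1"] by (simp add: sum.atLeast_Suc_atMost ST_0 mult_ac)
qed

lemma det_mesh:
  assumes es: "distinct es" "set es = E - T0"
  shows "det (mesh E ends T0 es) = real (\<Sum>j=0..length es. ST V E ends T0 j)"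
proof -
  have "det (mesh E ends T0 es)
      = det_on (\<lambda>e e'. (if e = e' then 1 else 0) + 1 * real_of_int (mesh_red_entry ends T0 e e')) (E - T0)"
    unfolding mesh_eq_mat[OF es(2)] es(2)[symmetric] mult_1
    by (rule det_mat_nth_eq_det_on[OF es(1)])
  moreover have "card (E - T0) = length es" using distinct_card[OF es(1)] es(2) by simp
  ultimately show ?thesis using det_on_diagonal_plus_mesh_red[of 1 1] by simp
qed

end

theorem theorem2p2:
  fixes V :: "'v set" and E :: "'e set" and ends :: "'e \<Rightarrow> 'v \<times> 'v"
    and T0 :: "'e set" and es fs :: "'e list"
  assumes "finite V" and "V \<noteq> {}" and "finite E"
    and "\<forall>e\<in>E. fst (ends e) \<in> V \<and> snd (ends e) \<in> V"
    and "connected_on V ends E"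
    and "spanning_tree V E ends T0"
    and "distinct es" and "set es = E - T0"
    and "distinct fs" and "set fs = T0"
  shows "(\<forall>U::real.
            det ((U + 1) \<cdot>\<^sub>m 1\<^sub>m (length es) - mesh E ends T0 es)
              = det (U \<cdot>\<^sub>m 1\<^sub>m (length es) - mesh_red ends T0 es fs)
          \<and> det (U \<cdot>\<^sub>m 1\<^sub>m (length es) - mesh_red ends T0 es fs)
              = U ^ length es + (\<Sum>j=1..length es.
                   (-1) ^ j * real (ST V E ends T0 j) * U ^ (length es - j)))
         \<and> det (mesh E ends T0 es) = real (\<Sum>j=0..length es. ST V E ends T0 j)
         \<and> (\<Sum>j=0..length es. ST V E ends T0 j) = card {T. spanning_tree V E ends T}"
proof -
  obtain r rho where "rooted_spanning_tree V E ends T0 r rho"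
    using ex_rooted_spanning_tree[OF assms(1-4,6)] .
  then interpret rooted_spanning_tree V E ends T0 r rho .
  have "card (E - T0) = length es" using distinct_card[OF assms(7)] assms(8) by simp
  thus ?thesis
    using char_mesh_eq_char_mesh_red[OF assms(7-10)] det_char_mesh_red[OF assms(7-10)]
      det_mesh[OF assms(7,8)] sum_ST_eq_card_spanning_trees
    by (simp del: of_nat_sum)
qed

end
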